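(* Let $H$ be a complex Hilbert space and $\{\mathcal{U}(t)\}_{t\geq 0}$ a strongly continuous semigroup on $H$ with generator $\mathcal{L}$. Let $z\in D(\mathcal{L}^\dagger)$ with $z\neq0$, $\mathcal{P}:=(\cdot,z)(z,z)^{-1}z$, $\mathcal{Q}:=1-\mathcal{P}$. For $x\in H$ let $f(x,\cdot):\mathbb{R}_+\to\mathbb{C}$ be the unique continuous solution of $$f(x,t)=(\mathcal{U}(t)\mathcal{Q}x,\mathcal{Q}\mathcal{L}^\dagger z)(z,z)^{-1}-\int_0^tf(x,t-s)\,(\mathcal{U}(s)z,\mathcal{Q}\mathcal{L}^\dagger z)(z,z)^{-1}\,ds,$$ and define $u(x,t):=\mathcal{P}x+\mathcal{U}(t)\mathcal{Q}x-\int_0^tf(x,t-s)\,\mathcal{U}(s)z\,ds$. Then $\overline{\mathcal{QL}}\mathcal{Q}=\mathcal{QLQ}$, and this operator generates the strongly continuous semigroup $\{\mathcal{G}(t):=u(\cdot,t)\}_{t\ge0}$.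
   Context: The scalar product $(\cdot,\cdot)$ on $H$ is conjugate-linear in its second argument. The generator is $\mathcal{L}x:=\lim_{h\searrow 0}\frac1h[\mathcal{U}(h)x-x]$ on the set $D(\mathcal{L})$ where the limit exists; $\dagger$ denotes the adjoint, the overbar the closure. Operator products carry natural domains: $D(\mathcal{QLQ})=\{x:\mathcal{Q}x\in D(\mathcal{L})\}$, $D(\overline{\mathcal{QL}}\mathcal{Q})=\{x:\mathcal{Q}x\in D(\overline{\mathcal{QL}})\}$. Integrals are Bochner integrals. *)

theory Defs
  imports "HOL-Analysis.Analysis"
begin

class complex_hilbert = banach +
  fixes scaleC :: "complex \<Rightarrow> 'a \<Rightarrow> 'a" (infixr "*\<^sub>C" 75)
    and cinner :: "'a \<Rightarrow> 'a \<Rightarrow> complex"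
  assumes scaleC_add_right: "a *\<^sub>C (x + y) = a *\<^sub>C x + a *\<^sub>C y"
    and scaleC_add_left: "(a + b) *\<^sub>C x = a *\<^sub>C x + b *\<^sub>C x"
    and scaleC_scaleC: "a *\<^sub>C (b *\<^sub>C x) = (a * b) *\<^sub>C x"
    and scaleC_one: "1 *\<^sub>C x = x"
    and scaleR_scaleC: "scaleR r x = complex_of_real r *\<^sub>C x"
    and cinner_add_left: "cinner (x + y) z = cinner x z + cinner y z"
    and cinner_scaleC_left: "cinner (a *\<^sub>C x) y = a * cinner x y"
    and cinner_commute: "cinner x y = cnj (cinner y x)"
    and cinner_self_norm: "cinner x x = complex_of_real ((norm x)\<^sup>2)"

definition bounded_clin :: "('a::complex_hilbert \<Rightarrow> 'a) \<Rightarrow> bool" where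
  "bounded_clin T \<longleftrightarrow> (\<forall>x y. T (x + y) = T x + T y) \<and> (\<forall>a x. T (a *\<^sub>C x) = a *\<^sub>C T x)
     \<and> (\<exists>K. \<forall>x. norm (T x) \<le> K * norm x)"

text \<open>Strongly continuous semigroup {U(t)}, t \<ge> 0 (values at negative t are irrelevant).\<close>
definition c0_semigroup :: "(real \<Rightarrow> 'a::complex_hilbert \<Rightarrow> 'a) \<Rightarrow> bool" where
  "c0_semigroup U \<longleftrightarrow> (\<forall>t\<ge>0. bounded_clin (U t)) \<and> U 0 = id
     \<and> (\<forall>s\<ge>0. \<forall>t\<ge>0. U (s + t) = U s \<circ> U t)
     \<and> (\<forall>x. ((\<lambda>t. U t x) \<longlongrightarrow> x) (at_right 0))"

definition gen_dom :: "(real \<Rightarrow> 'a::complex_hilbert \<Rightarrow> 'a) \<Rightarrow> 'a set" where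
  "gen_dom U = {x. \<exists>l. ((\<lambda>h. scaleR (1 / h) (U h x - x)) \<longlongrightarrow> l) (at_right 0)}"

definition gen :: "(real \<Rightarrow> 'a::complex_hilbert \<Rightarrow> 'a) \<Rightarrow> 'a \<Rightarrow> 'a" where
  "gen U x = Lim (at_right 0) (\<lambda>h. scaleR (1 / h) (U h x - x))"

definition adj_dom :: "'a::complex_hilbert set \<Rightarrow> ('a \<Rightarrow> 'a) \<Rightarrow> 'a set" where
  "adj_dom D A = {y. \<exists>w. \<forall>x\<in>D. cinner (A x) y = cinner x w}"

definition adj :: "'a::complex_hilbert set \<Rightarrow> ('a \<Rightarrow> 'a) \<Rightarrow> 'a \<Rightarrow> 'a" where
  "adj D A y = (THE w. \<forall>x\<in>D. cinner (A x) y = cinner x w)"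

definition op_graph :: "'a::complex_hilbert set \<Rightarrow> ('a \<Rightarrow> 'a) \<Rightarrow> ('a \<times> 'a) set" where
  "op_graph D A = {(x, A x) | x. x \<in> D}"

definition closable :: "'a::complex_hilbert set \<Rightarrow> ('a \<Rightarrow> 'a) \<Rightarrow> bool" where
  "closable D A \<longleftrightarrow> (\<forall>x y y'. (x, y) \<in> closure (op_graph D A) \<and> (x, y') \<in> closure (op_graph D A) \<longrightarrow> y = y')"

definition op_closure_dom :: "'a::complex_hilbert set \<Rightarrow> ('a \<Rightarrow> 'a) \<Rightarrow> 'a set" where
  "op_closure_dom D A = {x. \<exists>y. (x, y) \<in> closure (op_graph D A)}"

definition op_closure :: "'a::complex_hilbert set \<Rightarrow> ('a \<Rightarrow> 'a) \<Rightarrow> 'a \<Rightarrow> 'a" where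
  "op_closure D A x = (THE y. (x, y) \<in> closure (op_graph D A))"

end

theory Submission
  imports Defs
begin

text \<open>Write \<open>\<phi>(b) = (b, QL\<^sup>\<dagger>z)/(z, z)\<close> and \<open>k(s) = \<phi>(U(s)z)\<close>. Then \<open>f(x, \<cdot>)\<close> solves the
  linear Volterra equation \<open>f(x, \<cdot>) = \<phi>(U(\<cdot>)Qx) - f(x, \<cdot>) \<star> k\<close> (convolution over \<open>[0, t]\<close>),
  whose continuous solutions are unique and, by Gronwall's inequality, bounded on compact
  intervals. Uniqueness makes \<open>f\<close> linear and bounded in \<open>x\<close> and gives the shift rule
  \<open>f(u(x, t), s) = f(x, s + t)\<close>, from which the semigroup law follows by splitting the memory
  integral \<open>\<integral>\<^sub>0\<^sup>t f(x, t - s) U(s)z ds\<close> at \<open>t\<close>.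

  Since \<open>z \<in> D(L\<^sup>\<dagger>)\<close>, \<open>(U(t)b, z) = (b, z) + \<integral>\<^sub>0\<^sup>t (U(s)b, L\<^sup>\<dagger>z) ds\<close>. Together with Fubini this
  shows that \<open>h(t) = (u(x, t) - Px, z)\<close> satisfies \<open>h(t) = \<kappa> \<integral>\<^sub>0\<^sup>t h\<close>, so \<open>h = 0\<close>: the semigroup
  moves only the component orthogonal to \<open>z\<close>, and \<open>Q u(x, t) = u(x, t) - Px\<close>.

  The difference quotient of the memory term tends to \<open>f(x, 0)z = PLQx\<close>, so \<open>(u(x, h) - x)/h\<close>
  converges exactly when \<open>(U(h)Qx - Qx)/h\<close> does, with limit \<open>LQx - PLQx = QLQx\<close>. Finally \<open>QL\<close>
  is already closed on \<open>D(L)\<close>, because \<open>PLx = (x, L\<^sup>\<dagger>z)(z, z)\<^sup>-\<^sup>1z\<close> is continuous in \<open>x\<close> and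
  \<open>L\<close> is closed.\<close>

section \<open>Complex inner product algebra\<close>

lemma cinner_add_right: "cinner (x::'a::complex_hilbert) (y + z) = cinner x y + cinner x z"
  by (metis cinner_commute cinner_add_left complex_cnj_add)

lemma cinner_scaleC_right: "cinner x (a *\<^sub>C y) = cnj a * cinner x y"
  by (metis cinner_commute cinner_scaleC_left complex_cnj_mult complex_cnj_cnj)

lemma cinner_zero_left [simp]: "cinner 0 y = 0"
  using cinner_add_left[of 0 0 y] by simp

lemma cinner_zero_right [simp]: "cinner x 0 = 0"
  using cinner_add_right[of x 0 0] by simp

lemma cinner_minus_left: "cinner (- x) y = - cinner x y"
  using cinner_add_left[of x "-x" y] by (metis minus_unique add.right_inverse cinner_zero_left)

lemma cinner_diff_left: "cinner (x - y) z = cinner x z - cinner y z"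
  using cinner_add_left[of x "-y" z] cinner_minus_left[of y z] by simp

lemma cinner_minus_right: "cinner x (- y) = - cinner x y"
  by (metis cinner_commute cinner_minus_left complex_cnj_minus)

lemma cinner_diff_right: "cinner x (y - z) = cinner x y - cinner x z"
  using cinner_add_right[of x y "-z"] cinner_minus_right[of x z] by simp

lemma cinner_self_eq_zero: "cinner x x = 0 \<longleftrightarrow> x = 0"
  by (simp add: cinner_self_norm)

lemma scaleC_zero_right [simp]: "a *\<^sub>C 0 = 0"
  using scaleC_add_right[of a 0 0] by simp

lemma scaleC_zero_left [simp]: "0 *\<^sub>C x = 0"
  using scaleR_scaleC[of 0 x] by (metis of_real_0 scale_zero_left)

lemma scaleC_minus_right: "a *\<^sub>C (- x) = - (a *\<^sub>C x)"
  using scaleC_add_right[of a x "-x"] by (metis minus_unique add.right_inverse scaleC_zero_right)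

lemma scaleC_diff_right: "a *\<^sub>C (x - y) = a *\<^sub>C x - a *\<^sub>C y"
  using scaleC_add_right[of a x "-y"] scaleC_minus_right[of a y] by simp

lemma scaleC_of_real: "complex_of_real r *\<^sub>C x = r *\<^sub>R x"
  by (simp add: scaleR_scaleC)

lemma scaleC_scaleR_commute: "a *\<^sub>C (r *\<^sub>R x) = r *\<^sub>R (a *\<^sub>C x)"
  by (simp add: scaleR_scaleC scaleC_scaleC mult.commute)

lemma scaleR_scaleC_left: "(r *\<^sub>R a) *\<^sub>C x = r *\<^sub>R (a *\<^sub>C x)"
  by (simp add: scaleR_conv_of_real scaleC_scaleC[symmetric] scaleC_of_real)

lemma norm_scaleC: "norm (a *\<^sub>C x) = cmod a * norm x"
proof -
  have "cinner (a *\<^sub>C x) (a *\<^sub>C x) = (a * cnj a) * cinner x x"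
    by (simp add: cinner_scaleC_left cinner_scaleC_right mult.assoc)
  also have "a * cnj a = complex_of_real ((cmod a)\<^sup>2)"
    by (rule complex_norm_square[symmetric])
  finally have "(norm (a *\<^sub>C x))\<^sup>2 = (cmod a * norm x)\<^sup>2"
    by (simp only: cinner_self_norm of_real_mult[symmetric] of_real_eq_iff power_mult_distrib)
  then show ?thesis
    by (simp add: power2_eq_iff_nonneg)
qed

lemma cauchy_schwarz: "cmod (cinner x y) \<le> norm x * norm y"
proof (cases "y = 0")
  case True
  then show ?thesis by simp
next
  case False
  define c where "c = cinner y y"
  define t where "t = cinner x y / c"
  have c0: "c \<noteq> 0"
    using False by (simp add: c_def cinner_self_eq_zero)
  have c_real: "c = complex_of_real ((norm y)\<^sup>2)"
    by (simp add: c_def cinner_self_norm)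
  have "cinner (x - t *\<^sub>C y) (x - t *\<^sub>C y)
      = cinner x x - cnj t * cinner x y - t * cinner y x + t * cnj t * c"
    by (simp add: cinner_diff_left cinner_diff_right cinner_scaleC_left
        cinner_scaleC_right c_def algebra_simps)
  also have "\<dots> = cinner x x - complex_of_real ((cmod (cinner x y))\<^sup>2 / (norm y)\<^sup>2)"
  proof -
    have "(complex_of_real (cmod (cinner x y)))\<^sup>2 = cinner x y * cnj (cinner x y)"
      by (metis complex_norm_square of_real_power)
    then show ?thesis
      using c0 unfolding t_def by (simp add: cinner_commute[of y x] c_real field_simps)
  qed
  finally have "(cmod (cinner x y))\<^sup>2 / (norm y)\<^sup>2 \<le> (norm x)\<^sup>2"
    by (metis cinner_self_norm Re_complex_of_real minus_complex.sel(1) zero_le_power2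
        diff_ge_0_iff_ge)
  then have "(cmod (cinner x y))\<^sup>2 \<le> (norm x * norm y)\<^sup>2"
    using False by (simp add: pos_divide_le_eq power_mult_distrib)
  then show ?thesis
    by (simp add: power2_le_iff_abs_le)
qed

lemma bounded_bilinear_scaleC: "bounded_bilinear (\<lambda>a x. a *\<^sub>C x)"
proof (rule bounded_bilinear.intro)
  show "\<exists>K. \<forall>a b. norm (a *\<^sub>C b) \<le> norm a * norm b * K"
    by (rule exI[of _ 1]) (simp add: norm_scaleC)
qed (simp_all add: scaleC_add_left scaleC_add_right scaleR_scaleC_left scaleC_scaleR_commute)

lemma bounded_bilinear_cinner: "bounded_bilinear cinner"
proof (rule bounded_bilinear.intro)
  show "\<exists>K. \<forall>a b. norm (cinner a b) \<le> norm a * norm b * K"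
    by (rule exI[of _ 1]) (simp add: cauchy_schwarz)
qed (simp_all add: cinner_add_left cinner_add_right scaleR_scaleC cinner_scaleC_left
       cinner_scaleC_right scaleR_conv_of_real)

lemmas bounded_linear_scaleC_left = bounded_bilinear.bounded_linear_left[OF bounded_bilinear_scaleC]
lemmas bounded_linear_scaleC_right = bounded_bilinear.bounded_linear_right[OF bounded_bilinear_scaleC]
lemmas bounded_linear_cinner_left = bounded_bilinear.bounded_linear_left[OF bounded_bilinear_cinner]
lemmas tendsto_scaleC [tendsto_intros] = bounded_bilinear.tendsto[OF bounded_bilinear_scaleC]
lemmas tendsto_cinner [tendsto_intros] = bounded_bilinear.tendsto[OF bounded_bilinear_cinner]
lemmas continuous_on_scaleC [continuous_intros] =
  bounded_bilinear.continuous_on[OF bounded_bilinear_scaleC]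
lemmas continuous_on_cinner [continuous_intros] =
  bounded_bilinear.continuous_on[OF bounded_bilinear_cinner]

lemma bounded_clin_imp_bounded_linear:
  assumes "bounded_clin T"
  shows "bounded_linear T"
proof -
  from assms obtain K where add: "\<And>x y. T (x + y) = T x + T y"
    and scale: "\<And>a x. T (a *\<^sub>C x) = a *\<^sub>C T x" and K: "\<And>x. norm (T x) \<le> K * norm x"
    unfolding bounded_clin_def by blast
  show ?thesis
  proof (rule bounded_linear_intro[where K=K])
    show "T (r *\<^sub>R x) = r *\<^sub>R T x" for r x
      using scale[of "complex_of_real r" x] by (simp add: scaleC_of_real)
    show "norm (T x) \<le> norm x * K" for x
      using K[of x] by (simp add: mult.commute)
  qed (rule add)
qed

section \<open>Analysis\<close>

lemma has_vector_derivative_right_quotient: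
  fixes f :: "real \<Rightarrow> 'b::real_normed_vector"
  assumes der: "(f has_vector_derivative D) (at x within {x..b})" and xb: "x < b"
  shows "((\<lambda>h. (1/h) *\<^sub>R (f (x + h) - f x)) \<longlongrightarrow> D) (at_right 0)"
proof -
  have "(f has_vector_derivative D) (at_right x)"
    using der at_within_Icc_at_right[OF xb] by simp
  then have lim: "((\<lambda>y. (1 / norm (y - x)) *\<^sub>R (f y - (f x + (y - x) *\<^sub>R D))) \<longlongrightarrow> 0) (at_right x)"
    unfolding has_vector_derivative_def has_derivative_within by auto
  have "eventually (\<lambda>y. (1 / norm (y - x)) *\<^sub>R (f y - (f x + (y - x) *\<^sub>R D)) =
      (1/(y - x)) *\<^sub>R (f y - f x) - D) (at_right x)"
    using eventually_at_right_less[of x]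
    by eventually_elim (simp add: scaleR_diff_right scaleR_add_right)
  with lim have "((\<lambda>y. (1/(y - x)) *\<^sub>R (f y - f x) - D) \<longlongrightarrow> 0) (at_right x)"
    using tendsto_cong by fastforce
  then have "((\<lambda>y. (1/(y - x)) *\<^sub>R (f y - f x)) \<longlongrightarrow> D) (at_right x)"
    by (simp add: LIM_zero_iff)
  then show ?thesis
    by (subst (asm) filterlim_at_right_to_0) (simp add: add.commute)
qed

lemma gronwall_exp:
  fixes g :: "real \<Rightarrow> real"
  assumes cont: "continuous_on {0..T} g"
    and le: "\<And>t. t \<in> {0..T} \<Longrightarrow> g t \<le> a + K * integral {0..t} g"
    and K: "K \<ge> 0"
    and t: "t \<in> {0..T}"
  shows "g t \<le> a * exp (K * t)"
proof -
  define F where "F s = integral {0..s} g" for s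
  define D where "D s = exp (- K * s) * (a + K * F s)" for s
  have F_deriv: "(F has_real_derivative g s) (at s within {0..T})" if "s \<in> {0..T}" for s
    unfolding F_def by (rule integral_has_real_derivative[OF cont that])
  have D_deriv: "(D has_real_derivative exp (- K * s) * K * (g s - a - K * F s)) (at s within {0..T})"
    if "s \<in> {0..T}" for s
    unfolding D_def
    by (rule derivative_eq_intros F_deriv[OF that] refl | simp add: algebra_simps)+
  have "D t \<le> D 0"
  proof (rule DERIV_nonpos_imp_decreasing_open[where f=D and a=0 and b=t])
    show "0 \<le> t" using t by simp
    show "continuous_on {0..t} D"
      using D_deriv t
      by (meson DERIV_continuous atLeastAtMost_iff continuous_on_eq_continuous_within
          continuous_on_subset order.trans subsetI)
    fix s assume s: "0 < s" "s < t"
    then have sT: "s \<in> {0..T}" using t by auto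
    have "at s within {0..T} = at s" using s t by (intro at_within_Icc_at) auto
    then have "DERIV D s :> exp (- K * s) * K * (g s - a - K * F s)" using D_deriv[OF sT] by simp
    moreover have "exp (- K * s) * K * (g s - a - K * F s) \<le> 0"
      using le[OF sT] K by (simp add: F_def mult_nonneg_nonpos)
    ultimately show "\<exists>y. DERIV D s :> y \<and> y \<le> 0" by blast
  qed
  then have "a + K * F t \<le> a * exp (K * t)"
    by (simp add: D_def F_def exp_minus field_simps)
  then show ?thesis using le[OF t] by (simp add: F_def)
qed

lemma continuous_on_bound_Icc:
  fixes k :: "real \<Rightarrow> 'b::real_normed_vector"
  assumes "continuous_on {0..} k"
  shows "\<exists>K\<ge>0. \<forall>s\<in>{0..T}. norm (k s) \<le> K"
proof -
  have "compact (k ` {0..T})"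
    by (rule compact_continuous_image) (auto intro: continuous_on_subset[OF assms])
  then obtain K where "K > 0" "\<forall>v\<in>k ` {0..T}. norm v \<le> K"
    using compact_imp_bounded bounded_pos by blast
  then show ?thesis by (auto intro!: exI[of _ K])
qed

lemma integral_reflect_shift_Icc:
  fixes q :: "real \<Rightarrow> 'b::banach"
  shows "integral {a..b} (\<lambda>r. q (c - r)) = integral {c - b..c - a} q"
proof -
  have "integral {a..b} (\<lambda>r. q (c - r)) = integral {-b..-a} (\<lambda>x. q (c + x))"
    using Henstock_Kurzweil_Integration.integral_reflect_real[of b a "\<lambda>r. q (c - r)"] by simp
  also have "\<dots> = integral {-b + c..-a + c} q"
    using integral_shift_Icc_real[of "-b" "-a" q c] by (simp add: o_def)
  finally show ?thesis by simp
qed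

lemma integral_translate_Icc:
  fixes q :: "real \<Rightarrow> 'b::banach"
  shows "integral {a..b} (\<lambda>r. q (r - c)) = integral {a - c..b - c} q"
proof -
  have "integral {a - c..b - c} (\<lambda>r. q (c + r)) = integral {a..b} q"
    using integral_shift_Icc_real[of "a - c" "b - c" q c] by (simp add: o_def)
  moreover have "integral {a..b} (\<lambda>r. q (r - c)) = integral {a - c..b - c} (\<lambda>r. q (r - c + c))"
    using integral_shift_Icc_real[of "a - c" "b - c" "\<lambda>r. q (r - c)" c] by (simp add: o_def add.commute)
  ultimately show ?thesis by (simp add: add.commute)
qed

lemma integral_Icc_split_shift:
  fixes F :: "real \<Rightarrow> 'b::banach"
  assumes s: "s \<ge> 0" and t: "t \<ge> 0" and F: "continuous_on {0..s+t} F"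
  shows "integral {0..s+t} F = integral {0..s} F + integral {0..t} (\<lambda>r. F (s + r))"
proof -
  have "integral {0..s} F + integral {s..s+t} F = integral {0..s+t} F"
    by (rule Henstock_Kurzweil_Integration.integral_combine)
      (use s t F in \<open>auto intro: integrable_continuous_real\<close>)
  moreover have "integral {0..t} (F \<circ> (+) s) = integral {0+s..t+s} F"
    by (rule integral_shift_Icc_real)
  ultimately show ?thesis by (simp add: o_def add.commute)
qed

lemma continuous_on_reflect_Icc:
  fixes g :: "real \<Rightarrow> 'b::topological_space"
  assumes "continuous_on {0..} g" "t \<ge> 0"
  shows "continuous_on {0..t} (\<lambda>s. g (t - s))"
  by (rule continuous_on_compose2[OF assms(1)]) (auto intro!: continuous_intros)

lemma continuous_on_compose_max0:
  fixes q :: "real \<Rightarrow> 'b::topological_space"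
  assumes q: "continuous_on {0..} q" and k: "continuous_on S k"
  shows "continuous_on S (\<lambda>p. q (max 0 (k p)))"
  by (rule continuous_on_compose2[OF q]) (auto intro!: continuous_intros k)

lemma integral_Icc_rescale_unit:
  fixes q :: "real \<Rightarrow> 'b::banach"
  assumes ab: "a \<le> b" and q: "continuous_on {a..b} q"
  shows "integral {a..b} q = (b - a) *\<^sub>R integral {0..1} (\<lambda>\<beta>. q (a + (b - a) * \<beta>))"
proof (cases "a = b")
  case False
  then have m: "b - a > 0" using ab by simp
  have "(q has_integral integral {a..b} q) (cbox a b)"
    using integrable_continuous_real[OF q] by (simp add: integrable_integral)
  from has_integral_affinity'[OF this m, of a]
  have "((\<lambda>x. q ((b - a) * x + a)) has_integral (integral {a..b} q /\<^sub>R (b - a))) {0..1}"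
    using m by simp
  then have "integral {0..1} (\<lambda>\<beta>. q (a + (b - a) * \<beta>)) = integral {a..b} q /\<^sub>R (b - a)"
    by (simp add: add.commute integral_unique)
  then show ?thesis using m by simp
qed simp

text \<open>Continuity of parametric integrals over a moving interval: rescale the interval to
  \<open>[0, 1]\<close> and use continuity of parametric integrals over a fixed box.\<close>

lemma continuous_on_integral_upper_param:
  fixes G :: "real \<Rightarrow> real \<Rightarrow> 'b::banach"
  assumes G: "continuous_on UNIV (\<lambda>(s, r). G s r)"
  shows "continuous_on {0..} (\<lambda>s. integral {0..s} (G s))"
proof -
  have G2: "continuous_on UNIV (\<lambda>p. G (fst p) (snd p))"
    using G by (simp add: case_prod_beta')
  have eq: "integral {0..s} (G s) = s *\<^sub>R integral {0..1} (\<lambda>\<beta>. G s (s * \<beta>))" if "s \<in> {0..}" for s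
  proof -
    have "continuous_on {0..s} (G s)"
      by (rule continuous_on_compose2[OF G2, of _ "\<lambda>r. (s, r)", simplified])
        (auto intro!: continuous_intros)
    then show ?thesis using that integral_Icc_rescale_unit[of 0 s "G s"] by simp
  qed
  have c0: "continuous_on UNIV ((\<lambda>p. G (fst p) (snd p)) \<circ> (\<lambda>p. (fst p, fst p * snd p)))"
    by (intro continuous_on_compose continuous_intros) (rule continuous_on_subset[OF G2], simp)
  have "(\<lambda>(s, \<beta>). G s (s * \<beta>)) = (\<lambda>p. G (fst p) (snd p)) \<circ> (\<lambda>p. (fst p, fst p * snd p))"
    by (auto simp: fun_eq_iff)
  then have "continuous_on ({0..} \<times> cbox 0 1) (\<lambda>(s, \<beta>). G s (s * \<beta>))"
    using continuous_on_subset[OF c0] by simp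
  then have "continuous_on {0..} (\<lambda>s. integral (cbox 0 1) (\<lambda>\<beta>. G s (s * \<beta>)))"
    by (rule integral_continuous_on_param)
  then have "continuous_on {0..} (\<lambda>s. s *\<^sub>R integral {0..1} (\<lambda>\<beta>. G s (s * \<beta>)))"
    by (auto intro!: continuous_intros)
  then show ?thesis using eq continuous_on_cong by (metis (no_types, lifting))
qed

lemma continuous_on_integral_lower_param:
  fixes G :: "real \<Rightarrow> real \<Rightarrow> 'b::banach"
  assumes G: "continuous_on UNIV (\<lambda>(s, r). G s r)"
  shows "continuous_on {..t} (\<lambda>r. integral {r..t} (\<lambda>s. G s r))"
proof -
  have G2: "continuous_on UNIV (\<lambda>p. G (fst p) (snd p))"
    using G by (simp add: case_prod_beta')
  have eq: "integral {r..t} (\<lambda>s. G s r) = (t - r) *\<^sub>R integral {0..1} (\<lambda>\<beta>. G (r + (t - r) * \<beta>) r)"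
    if "r \<in> {..t}" for r
  proof -
    have "continuous_on {r..t} (\<lambda>s. G s r)"
      by (rule continuous_on_compose2[OF G2, of _ "\<lambda>s. (s, r)", simplified])
        (auto intro!: continuous_intros)
    then show ?thesis using that integral_Icc_rescale_unit[of r t "\<lambda>s. G s r"] by simp
  qed
  have c0: "continuous_on UNIV ((\<lambda>p. G (fst p) (snd p)) \<circ> (\<lambda>p. (fst p + (t - fst p) * snd p, fst p)))"
    by (intro continuous_on_compose continuous_intros) (rule continuous_on_subset[OF G2], simp)
  have "(\<lambda>(r, \<beta>). G (r + (t - r) * \<beta>) r) = (\<lambda>p. G (fst p) (snd p)) \<circ> (\<lambda>p. (fst p + (t - fst p) * snd p, fst p))"
    by (auto simp: fun_eq_iff)
  then have "continuous_on ({..t} \<times> cbox 0 1) (\<lambda>(r, \<beta>). G (r + (t - r) * \<beta>) r)"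
    using continuous_on_subset[OF c0] by simp
  then have "continuous_on {..t} (\<lambda>r. integral (cbox 0 1) (\<lambda>\<beta>. G (r + (t - r) * \<beta>) r))"
    by (rule integral_continuous_on_param)
  then have "continuous_on {..t} (\<lambda>r. (t - r) *\<^sub>R integral {0..1} (\<lambda>\<beta>. G (r + (t - r) * \<beta>) r))"
    by (auto intro!: continuous_intros)
  then show ?thesis using eq continuous_on_cong by (metis (no_types, lifting))
qed

lemma continuous_on_convolution_integral:
  fixes G :: "real \<Rightarrow> real \<Rightarrow> 'b::banach"
  assumes G: "continuous_on ({0..} \<times> {0..}) (\<lambda>(a, b). G a b)"
  shows "continuous_on {0..} (\<lambda>s. integral {0..s} (\<lambda>r. G (s - r) r))"
proof -
  define G' where "G' s r = G (max 0 (s - r)) (max 0 r)" for s r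
  have "continuous_on UNIV (\<lambda>p. (\<lambda>(a, b). G a b) (max 0 (fst p - snd p), max 0 (snd p)))"
    by (rule continuous_on_compose2[OF G]) (auto intro!: continuous_intros)
  then have "continuous_on {0..} (\<lambda>s. integral {0..s} (G' s))"
    by (intro continuous_on_integral_upper_param) (simp add: G'_def case_prod_beta')
  moreover have "integral {0..s} (G' s) = integral {0..s} (\<lambda>r. G (s - r) r)" if "s \<in> {0..}" for s
    by (rule integral_cong) (simp add: G'_def)
  ultimately show ?thesis
    using continuous_on_cong by (metis (no_types, lifting))
qed

lemma average_convolution_tendsto:
  fixes G :: "real \<Rightarrow> real \<Rightarrow> 'b::banach"
  assumes G: "continuous_on ({0..} \<times> {0..}) (\<lambda>(a, b). G a b)"
  shows "((\<lambda>h. (1/h) *\<^sub>R integral {0..h} (\<lambda>s. G (h - s) s)) \<longlongrightarrow> G 0 0) (at_right 0)"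
proof (rule tendstoI)
  fix e :: real assume e: "e > 0"
  obtain d where d: "d > 0"
    and near: "\<And>p. p \<in> {0..} \<times> {0..} \<Longrightarrow> dist p (0, 0) < d \<Longrightarrow>
      dist ((\<lambda>(a, b). G a b) p) (G 0 0) < e / 2"
    using continuous_on_iff[THEN iffD1, OF G, rule_format, of "(0, 0)" "e / 2"] e by auto
  have cont: "continuous_on {0..h} (\<lambda>s. G (h - s) s)" for h
    by (rule continuous_on_compose2[OF G, of _ "\<lambda>s. (h - s, s)", simplified])
      (auto intro!: continuous_intros)
  have "eventually (\<lambda>h. h \<in> {0<..<d}) (at_right 0)"
    by (rule eventually_at_right_real[OF d])
  then show "eventually (\<lambda>h. dist ((1/h) *\<^sub>R integral {0..h} (\<lambda>s. G (h - s) s)) (G 0 0) < e)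
    (at_right 0)"
  proof eventually_elim
    case (elim h)
    then have h: "0 < h" "h < d" by auto
    have "norm (G (h - s) s - G 0 0) \<le> e / 2" if s: "s \<in> {0..h}" for s
    proof -
      have "dist (h - s, s) (0, 0) \<le> norm (h - s) + norm s"
        by (metis dist_0_norm norm_Pair_le zero_prod_def dist_commute)
      also have "\<dots> < d" using s h by simp
      finally show ?thesis
        using near[of "(h - s, s)"] s by (simp add: dist_norm less_imp_le)
    qed
    then have "norm (integral {0..h} (\<lambda>s. G (h - s) s - G 0 0)) \<le> e / 2 * (h - 0)"
      using h by (intro integral_bound) (auto intro!: continuous_intros cont)
    moreover have "integral {0..h} (\<lambda>s. G (h - s) s - G 0 0)
        = integral {0..h} (\<lambda>s. G (h - s) s) - h *\<^sub>R G 0 0"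
      using integral_diff[OF integrable_continuous_real[OF cont] integrable_const_ivl] h by simp
    moreover have "(1/h) *\<^sub>R integral {0..h} (\<lambda>s. G (h - s) s) - G 0 0
        = (1/h) *\<^sub>R (integral {0..h} (\<lambda>s. G (h - s) s) - h *\<^sub>R G 0 0)"
      using h by (simp add: scaleR_diff_right)
    ultimately have "dist ((1/h) *\<^sub>R integral {0..h} (\<lambda>s. G (h - s) s)) (G 0 0) \<le> e / 2"
      using h by (simp add: dist_norm divide_simps)
    then show ?case using e by simp
  qed
qed

lemma lborel_integral_indicator_Icc:
  fixes q :: "real \<Rightarrow> complex"
  assumes "continuous_on {a..b} q"
  shows "(\<integral>x. indicator {a..b} x *\<^sub>R q x \<partial>lborel) = integral {a..b} q"
proof -
  have "set_integrable lborel {a..b} q"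
    unfolding set_integrable_def using borel_integrable_compact[OF compact_Icc assms] .
  from set_borel_integral_eq_integral(2)[OF this] show ?thesis
    unfolding set_lebesgue_integral_def .
qed

lemma integrable_indicator_triangle:
  fixes F :: "real \<Rightarrow> real \<Rightarrow> complex"
  assumes F: "continuous_on UNIV (\<lambda>(s, r). F s r)"
  shows "integrable (lborel \<Otimes>\<^sub>M lborel)
    (\<lambda>(s, r). indicator {p. 0 \<le> snd p \<and> snd p \<le> fst p \<and> fst p \<le> t} (s, r) *\<^sub>R F s r)"
proof -
  define T where "T = {p :: real \<times> real. 0 \<le> snd p \<and> snd p \<le> fst p \<and> fst p \<le> t}"
  have "closed T"
    unfolding T_def by (intro closed_Collect_conj closed_Collect_le) (auto intro!: continuous_intros)
  moreover have "T \<subseteq> cbox (0, 0) (t, t)"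
    unfolding T_def by (auto simp: cbox_Pair_eq)
  ultimately have "compact T"
    using bounded_cbox bounded_subset compact_eq_bounded_closed by blast
  then have "integrable lborel (\<lambda>p. indicator T p *\<^sub>R (\<lambda>(s, r). F s r) p)"
    by (rule borel_integrable_compact) (rule continuous_on_subset[OF F], simp)
  then show ?thesis
    by (simp add: lborel_prod T_def case_prod_beta')
qed

lemma integral_triangle_swap:
  fixes F :: "real \<Rightarrow> real \<Rightarrow> complex"
  assumes F: "continuous_on UNIV (\<lambda>(s, r). F s r)" and t: "0 \<le> t"
  shows "integral {0..t} (\<lambda>s. integral {0..s} (F s)) = integral {0..t} (\<lambda>r. integral {r..t} (\<lambda>s. F s r))"
proof -
  define g where "g s r = indicator {p. 0 \<le> snd p \<and> snd p \<le> fst p \<and> fst p \<le> t} (s, r) *\<^sub>R F s r"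
    for s r
  have F2: "continuous_on UNIV (\<lambda>p. F (fst p) (snd p))"
    using F by (simp add: case_prod_beta')
  have sections: "continuous_on S (F s)" "continuous_on S (\<lambda>s. F s r)" for S s r
    by (rule continuous_on_compose2[OF F2, of _ "\<lambda>r. (s, r)", simplified]
        continuous_on_compose2[OF F2, of _ "\<lambda>s. (s, r)", simplified];
        auto intro!: continuous_intros)+
  have inner1: "(\<integral>r. g s r \<partial>lborel) = indicator {0..t} s *\<^sub>R integral {0..s} (F s)" for s
  proof -
    have "(\<integral>r. g s r \<partial>lborel) = (\<integral>r. indicator {0..t} s *\<^sub>R (indicator {0..s} r *\<^sub>R F s r) \<partial>lborel)"
      by (rule Bochner_Integration.integral_cong) (auto simp: g_def split: split_indicator)
    then show ?thesis
      by (simp only: Bochner_Integration.integral_scaleR_right lborel_integral_indicator_Icc sections)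
  qed
  have inner2: "(\<integral>s. g s r \<partial>lborel) = indicator {0..t} r *\<^sub>R integral {r..t} (\<lambda>s. F s r)" for r
  proof -
    have "(\<integral>s. g s r \<partial>lborel) = (\<integral>s. indicator {0..t} r *\<^sub>R (indicator {r..t} s *\<^sub>R F s r) \<partial>lborel)"
      by (rule Bochner_Integration.integral_cong) (auto simp: g_def split: split_indicator)
    then show ?thesis
      by (simp only: Bochner_Integration.integral_scaleR_right lborel_integral_indicator_Icc sections)
  qed
  have "(\<integral>s. \<integral>r. g s r \<partial>lborel \<partial>lborel) = (\<integral>r. \<integral>s. g s r \<partial>lborel \<partial>lborel)"
    using lborel_pair.Fubini_integral[OF integrable_indicator_triangle[OF F, of t]]
    by (simp add: g_def)
  moreover have "(\<integral>s. \<integral>r. g s r \<partial>lborel \<partial>lborel) = integral {0..t} (\<lambda>s. integral {0..s} (F s))"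
    unfolding inner1
    by (rule lborel_integral_indicator_Icc, rule continuous_on_subset[OF
        continuous_on_integral_upper_param[OF F]]) auto
  moreover have "(\<integral>r. \<integral>s. g s r \<partial>lborel \<partial>lborel) = integral {0..t} (\<lambda>r. integral {r..t} (\<lambda>s. F s r))"
    unfolding inner2
    by (rule lborel_integral_indicator_Icc, rule continuous_on_subset[OF
        continuous_on_integral_lower_param[OF F]]) auto
  ultimately show ?thesis by simp
qed

lemma bounded_linear_bound_from_ball:
  fixes L :: "'a::real_normed_vector \<Rightarrow> 'b::real_normed_vector"
  assumes L: "bounded_linear L" and r: "r > 0" and B: "\<And>x. x \<in> ball x0 r \<Longrightarrow> norm (L x) \<le> B"
  shows "norm (L y) \<le> (4 * B / r) * norm y"
proof (cases "y = 0")
  case True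
  then show ?thesis using L by (simp add: linear_simps)
next
  case False
  define v where "v = (r / 2 / norm y) *\<^sub>R y"
  have "norm v = r / 2" using False r by (simp add: v_def)
  then have "norm (L (x0 + v)) \<le> B" "norm (L x0) \<le> B"
    using r by (auto intro!: B simp: dist_norm)
  moreover have "L v = L (x0 + v) - L x0"
    using L by (simp add: linear_simps)
  ultimately have "norm (L v) \<le> 2 * B"
    by (metis mult_2 add_mono norm_triangle_ineq4 order_trans)
  moreover have "L v = (r / 2 / norm y) *\<^sub>R L y"
    using L by (simp add: v_def linear_simps)
  ultimately have "(r / 2 / norm y) * norm (L y) \<le> 2 * B"
    using r by simp
  then show ?thesis
    using r False by (simp add: field_simps)
qed

lemma uniform_boundedness:
  fixes T :: "'i \<Rightarrow> 'a::banach \<Rightarrow> 'b::real_normed_vector"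
  assumes lin: "\<And>i. i \<in> I \<Longrightarrow> bounded_linear (T i)"
    and pointwise: "\<And>x. \<exists>B. \<forall>i\<in>I. norm (T i x) \<le> B"
  shows "\<exists>M. \<forall>i\<in>I. \<forall>x. norm (T i x) \<le> M * norm x"
proof -
  define E where "E n = {x. \<forall>i\<in>I. norm (T i x) \<le> real n}" for n :: nat
  have closed_E: "closed (E n)" for n
  proof -
    have "closed {x. norm (T i x) \<le> real n}" if "i \<in> I" for i
      using linear_continuous_on[OF lin[OF that]]
      by (intro closed_Collect_le continuous_on_norm continuous_on_const)
    then have "closed (\<Inter>i\<in>I. {x. norm (T i x) \<le> real n})" by blast
    moreover have "E n = (\<Inter>i\<in>I. {x. norm (T i x) \<le> real n})"
      unfolding E_def by auto
    ultimately show ?thesis by simp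
  qed
  have "\<Union>(range E) = UNIV"
  proof -
    have "\<exists>n. x \<in> E n" for x
    proof -
      obtain B where "\<forall>i\<in>I. norm (T i x) \<le> B" using pointwise by blast
      moreover obtain n :: nat where "B \<le> real n" using real_arch_simple by blast
      ultimately have "x \<in> E n" unfolding E_def by (auto intro: order_trans)
      then show ?thesis by blast
    qed
    then show ?thesis by auto
  qed
  then have "\<exists>n. interior (E n) \<noteq> {}"
    using Baire_category_alt[of euclidean "range E"] closed_E
    by (force simp: completely_metrizable_space_euclidean closed_closedin[symmetric])
  then obtain n x0 r where "r > 0" "ball x0 r \<subseteq> E n"
    by (meson ex_in_conv mem_interior)
  then have "norm (T i y) \<le> (4 * real n / r) * norm y" if "i \<in> I" for i y
    using that by (intro bounded_linear_bound_from_ball[OF lin]) (auto simp: E_def)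
  then show ?thesis by blast
qed

section \<open>Volterra convolution equations\<close>

definition volterra_conv :: "(real \<Rightarrow> complex) \<Rightarrow> (real \<Rightarrow> complex) \<Rightarrow> real \<Rightarrow> complex" where
  "volterra_conv g k t = integral {0..t} (\<lambda>s. g (t - s) * k s)"

lemma volterra_conv_0 [simp]: "volterra_conv g k 0 = 0"
  by (simp add: volterra_conv_def)

lemma integrable_volterra_conv:
  fixes g k :: "real \<Rightarrow> complex"
  assumes "continuous_on {0..} g" "continuous_on {0..} k" "t \<ge> 0"
  shows "(\<lambda>s. g (t - s) * k s) integrable_on {0..t}"
  by (intro integrable_continuous_real continuous_intros continuous_on_reflect_Icc[OF assms(1,3)]
      continuous_on_subset[OF assms(2)]) auto

lemma volterra_conv_add:
  assumes "continuous_on {0..} g1" "continuous_on {0..} g2" "continuous_on {0..} k" "t \<ge> 0"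
  shows "volterra_conv (\<lambda>\<tau>. g1 \<tau> + g2 \<tau>) k t = volterra_conv g1 k t + volterra_conv g2 k t"
  unfolding volterra_conv_def
  using integral_add[OF integrable_volterra_conv[OF assms(1,3,4)] integrable_volterra_conv[OF assms(2,3,4)]]
  by (simp add: algebra_simps)

lemma volterra_conv_diff:
  assumes "continuous_on {0..} g1" "continuous_on {0..} g2" "continuous_on {0..} k" "t \<ge> 0"
  shows "volterra_conv (\<lambda>\<tau>. g1 \<tau> - g2 \<tau>) k t = volterra_conv g1 k t - volterra_conv g2 k t"
  unfolding volterra_conv_def
  using integral_diff[OF integrable_volterra_conv[OF assms(1,3,4)] integrable_volterra_conv[OF assms(2,3,4)]]
  by (simp add: algebra_simps)

lemma volterra_conv_cmult: "volterra_conv (\<lambda>\<tau>. a * g \<tau>) k t = a * volterra_conv g k t"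
  by (simp add: volterra_conv_def mult.assoc)

lemma continuous_on_volterra_conv:
  assumes "continuous_on {0..} g" "continuous_on {0..} k"
  shows "continuous_on {0..} (volterra_conv g k)"
  unfolding volterra_conv_def[abs_def]
proof (rule continuous_on_convolution_integral)
  show "continuous_on ({0..} \<times> {0..}) (\<lambda>(a, b). g a * k b)"
    unfolding case_prod_beta'
    by (intro continuous_intros continuous_on_compose2[OF assms(1) continuous_on_fst[OF continuous_on_id]]
        continuous_on_compose2[OF assms(2) continuous_on_snd[OF continuous_on_id]]) auto
qed

lemma norm_volterra_conv_le:
  assumes g: "continuous_on {0..} g" and k: "continuous_on {0..} k" and t: "t \<ge> 0"
    and K: "\<forall>s\<in>{0..t}. cmod (k s) \<le> K"
  shows "cmod (volterra_conv g k t) \<le> K * integral {0..t} (\<lambda>r. cmod (g r))"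
proof -
  have "cmod (volterra_conv g k t) \<le> integral {0..t} (\<lambda>s. cmod (g (t - s)) * K)"
    unfolding volterra_conv_def
  proof (rule integral_norm_bound_integral)
    show "(\<lambda>s. g (t - s) * k s) integrable_on {0..t}"
      by (rule integrable_volterra_conv[OF g k t])
    show "(\<lambda>s. cmod (g (t - s)) * K) integrable_on {0..t}"
      by (intro integrable_continuous_real continuous_intros continuous_on_reflect_Icc g t)
  qed (use K in \<open>auto simp: norm_mult mult_left_mono\<close>)
  also have "\<dots> = integral {0..t} (\<lambda>r. cmod (g r)) * K"
    using integral_reflect_shift_Icc[of 0 t "\<lambda>r. cmod (g r)" t] by simp
  finally show ?thesis by (simp add: mult.commute)
qed

lemma volterra_solution_bound:
  assumes g: "continuous_on {0..} g" and k: "continuous_on {0..} k"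
    and eq: "\<And>s. s \<in> {0..T} \<Longrightarrow> g s = a s - volterra_conv g k s"
    and A: "\<And>s. s \<in> {0..T} \<Longrightarrow> cmod (a s) \<le> A"
    and K: "K \<ge> 0" "\<forall>s\<in>{0..T}. cmod (k s) \<le> K"
    and t: "t \<in> {0..T}"
  shows "cmod (g t) \<le> A * exp (K * T)"
proof -
  have "cmod (g t) \<le> A * exp (K * t)"
  proof (rule gronwall_exp[where T=T])
    show "continuous_on {0..T} (\<lambda>r. cmod (g r))"
      by (intro continuous_intros continuous_on_subset[OF g]) auto
    fix s assume s: "s \<in> {0..T}"
    have "cmod (g s) \<le> cmod (a s) + cmod (volterra_conv g k s)"
      using eq[OF s] by (simp add: norm_triangle_ineq4)
    also have "\<dots> \<le> A + K * integral {0..s} (\<lambda>r. cmod (g r))"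
      using s K by (intro add_mono A norm_volterra_conv_le g k) auto
    finally show "cmod (g s) \<le> A + K * integral {0..s} (\<lambda>r. cmod (g r))" .
  qed (use K t in auto)
  also have "\<dots> \<le> A * exp (K * T)"
    using t K A[of 0] by (intro mult_left_mono) (auto intro: order_trans[OF norm_ge_zero] mult_left_mono)
  finally show ?thesis .
qed

lemma volterra_solution_unique:
  assumes g1: "continuous_on {0..} g1" and g2: "continuous_on {0..} g2" and k: "continuous_on {0..} k"
    and eq1: "\<And>s. s \<ge> 0 \<Longrightarrow> g1 s = a s - volterra_conv g1 k s"
    and eq2: "\<And>s. s \<ge> 0 \<Longrightarrow> g2 s = a s - volterra_conv g2 k s"
    and t: "t \<ge> 0"
  shows "g1 t = g2 t"
proof -
  define d where "d s = g1 s - g2 s" for s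
  have d: "continuous_on {0..} d"
    unfolding d_def by (intro continuous_intros g1 g2)
  have "d s = 0 - volterra_conv d k s" if "s \<in> {0..t}" for s
    using that eq1 eq2 volterra_conv_diff[OF g1 g2 k] by (simp add: d_def[abs_def])
  moreover obtain K where "K \<ge> 0" "\<forall>s\<in>{0..t}. cmod (k s) \<le> K"
    using continuous_on_bound_Icc[OF k] by blast
  ultimately have "cmod (d t) \<le> 0 * exp (K * t)"
    using t by (intro volterra_solution_bound[OF d k]) auto
  then show ?thesis by (simp add: d_def)
qed

text \<open>In terms of \<open>(g \<star> m)(\<tau>) = \<integral>\<^sub>0\<^sup>\<tau> g(\<tau> - r) m(r) dr\<close>, the next two lemmas say that
  \<open>1 \<star> (g \<star> m)\<close> and \<open>g \<star> (1 \<star> m)\<close> both equal \<open>(1 \<star> g) \<star> m\<close>; each is Fubini on a triangle.\<close>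

lemma integral_volterra_conv_swap:
  fixes g m :: "real \<Rightarrow> complex"
  assumes g: "continuous_on {0..} g" and m: "continuous_on {0..} m" and \<tau>: "\<tau> \<ge> 0"
  shows "integral {0..\<tau>} (volterra_conv g m) = integral {0..\<tau>} (\<lambda>\<sigma>. integral {0..\<tau> - \<sigma>} g * m \<sigma>)"
proof -
  define F where "F s r = g (max 0 (s - r)) * m (max 0 r)" for s r
  have "continuous_on UNIV (\<lambda>(s, r). F s r)"
    unfolding F_def case_prod_beta'
    by (intro continuous_intros continuous_on_compose_max0[OF g] continuous_on_compose_max0[OF m])
  then have "integral {0..\<tau>} (\<lambda>s. integral {0..s} (F s)) = integral {0..\<tau>} (\<lambda>r. integral {r..\<tau>} (\<lambda>s. F s r))"
    by (rule integral_triangle_swap[OF _ \<tau>])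
  moreover have "integral {0..s} (F s) = volterra_conv g m s" if "s \<in> {0..\<tau>}" for s
    unfolding volterra_conv_def by (rule integral_cong) (use that in \<open>simp add: F_def\<close>)
  moreover have "integral {r..\<tau>} (\<lambda>s. F s r) = integral {0..\<tau> - r} g * m r" if "r \<in> {0..\<tau>}" for r
  proof -
    have "integral {r..\<tau>} (\<lambda>s. F s r) = integral {r..\<tau>} (\<lambda>s. g (s - r) * m r)"
      by (rule integral_cong) (use that in \<open>simp add: F_def\<close>)
    then show ?thesis
      using integral_translate_Icc[of r \<tau> g r] by simp
  qed
  ultimately show ?thesis
    by (metis (no_types, lifting) integral_cong)
qed

lemma integral_mult_primitive_swap:
  fixes g m :: "real \<Rightarrow> complex"
  assumes g: "continuous_on {0..} g" and m: "continuous_on {0..} m" and \<tau>: "\<tau> \<ge> 0"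
  shows "integral {0..\<tau>} (\<lambda>r. g (\<tau> - r) * integral {0..r} m)
    = integral {0..\<tau>} (\<lambda>\<sigma>. integral {0..\<tau> - \<sigma>} g * m \<sigma>)"
proof -
  define F where "F r \<sigma> = g (max 0 (\<tau> - r)) * m (max 0 \<sigma>)" for r \<sigma>
  have F: "continuous_on UNIV (\<lambda>(r, \<sigma>). F r \<sigma>)"
    unfolding F_def case_prod_beta'
    by (intro continuous_intros continuous_on_compose_max0[OF g] continuous_on_compose_max0[OF m])
  have "integral {0..\<tau>} (\<lambda>r. g (\<tau> - r) * integral {0..r} m) = integral {0..\<tau>} (\<lambda>r. integral {0..r} (F r))"
  proof (rule integral_cong)
    fix r assume r: "r \<in> {0..\<tau>}"
    have "integral {0..r} (F r) = integral {0..r} (\<lambda>\<sigma>. g (\<tau> - r) * m \<sigma>)"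
      by (rule integral_cong) (use r in \<open>simp add: F_def\<close>)
    then show "g (\<tau> - r) * integral {0..r} m = integral {0..r} (F r)" by simp
  qed
  also have "\<dots> = integral {0..\<tau>} (\<lambda>\<sigma>. integral {\<sigma>..\<tau>} (\<lambda>r. F r \<sigma>))"
    by (rule integral_triangle_swap[OF F \<tau>])
  also have "\<dots> = integral {0..\<tau>} (\<lambda>\<sigma>. integral {0..\<tau> - \<sigma>} g * m \<sigma>)"
  proof (rule integral_cong)
    fix \<sigma> assume \<sigma>: "\<sigma> \<in> {0..\<tau>}"
    have "integral {\<sigma>..\<tau>} (\<lambda>r. F r \<sigma>) = integral {\<sigma>..\<tau>} (\<lambda>r. g (\<tau> - r) * m \<sigma>)"
      by (rule integral_cong) (use \<sigma> in \<open>simp add: F_def\<close>)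
    then show "integral {\<sigma>..\<tau>} (\<lambda>r. F r \<sigma>) = integral {0..\<tau> - \<sigma>} g * m \<sigma>"
      using integral_reflect_shift_Icc[of \<sigma> \<tau> g \<tau>] by simp
  qed
  finally show ?thesis .
qed

section \<open>Strongly continuous semigroups\<close>

locale strongly_continuous_semigroup =
  fixes U :: "real \<Rightarrow> 'a::complex_hilbert \<Rightarrow> 'a"
  assumes c0_semigroup: "c0_semigroup U"
begin

lemma bounded_clin_U: "t \<ge> 0 \<Longrightarrow> bounded_clin (U t)"
  using c0_semigroup unfolding c0_semigroup_def by blast

lemma bounded_linear_U: "t \<ge> 0 \<Longrightarrow> bounded_linear (U t)"
  using bounded_clin_U bounded_clin_imp_bounded_linear by blast

lemma U_add: "t \<ge> 0 \<Longrightarrow> U t (x + y) = U t x + U t y"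
  using bounded_linear_U linear_add bounded_linear.linear by blast

lemma U_diff: "t \<ge> 0 \<Longrightarrow> U t (x - y) = U t x - U t y"
  using bounded_linear_U linear_diff bounded_linear.linear by blast

lemma U_scaleR: "t \<ge> 0 \<Longrightarrow> U t (r *\<^sub>R x) = r *\<^sub>R U t x"
  using bounded_linear_U linear_scale bounded_linear.linear by blast

lemma U_scaleC: "t \<ge> 0 \<Longrightarrow> U t (a *\<^sub>C x) = a *\<^sub>C U t x"
  using bounded_clin_U unfolding bounded_clin_def by blast

lemma U_0 [simp]: "U 0 x = x"
  using c0_semigroup unfolding c0_semigroup_def by simp

lemma U_add_time: "s \<ge> 0 \<Longrightarrow> t \<ge> 0 \<Longrightarrow> U (s + t) x = U s (U t x)"
  using c0_semigroup unfolding c0_semigroup_def by simp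

lemma U_tendsto_0: "((\<lambda>t. U t x) \<longlongrightarrow> x) (at_right 0)"
  using c0_semigroup unfolding c0_semigroup_def by blast

lemma U_tendsto: "t \<ge> 0 \<Longrightarrow> (g \<longlongrightarrow> a) F \<Longrightarrow> ((\<lambda>n. U t (g n)) \<longlongrightarrow> U t a) F"
  using bounded_linear_U bounded_linear.tendsto by blast

lemma U_tendsto_at_0_sequentially:
  assumes t: "\<And>n. t n \<ge> 0" and t_lim: "t \<longlonglongrightarrow> 0"
  shows "(\<lambda>n. U (t n) y) \<longlonglongrightarrow> y"
proof (rule tendstoI)
  fix e :: real assume "e > 0"
  then have "eventually (\<lambda>s. dist (U s y) y < e) (at_right 0)"
    using U_tendsto_0 tendstoD by blast
  then obtain \<delta> where "\<delta> > 0" and \<delta>: "\<And>s. 0 < s \<Longrightarrow> s < \<delta> \<Longrightarrow> dist (U s y) y < e"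
    unfolding eventually_at_right_field by auto
  then have "eventually (\<lambda>n. t n < \<delta>) sequentially"
    using t_lim by (simp add: order_tendstoD)
  then show "eventually (\<lambda>n. dist (U (t n) y) y < e) sequentially"
  proof eventually_elim
    case (elim n)
    show ?case
    proof (cases "t n = 0")
      case False
      then show ?thesis using t[of n] elim \<delta> by simp
    qed (use \<open>e > 0\<close> in simp)
  qed
qed

text \<open>Local boundedness is the uniform boundedness principle applied to \<open>U(t\<^sub>n)\<close> along a
  sequence \<open>t\<^sub>n \<searrow> 0\<close> on which \<open>\<parallel>U(t\<^sub>n)\<parallel> \<ge> n\<close>.\<close>

lemma locally_bounded: "\<exists>d>0. \<exists>M. \<forall>t\<in>{0..d}. \<forall>x. norm (U t x) \<le> M * norm x"
proof (rule ccontr)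
  assume unbounded: "\<not> ?thesis"
  have "\<exists>t\<in>{0..1 / Suc n}. \<exists>x. real n * norm x < norm (U t x)" for n :: nat
  proof -
    have "1 / real (Suc n) > 0" by simp
    then have "\<not> (\<forall>t\<in>{0..1 / Suc n}. \<forall>x. norm (U t x) \<le> real n * norm x)"
      using unbounded by blast
    then show ?thesis by (auto simp: not_le)
  qed
  then obtain t x where t: "\<And>n. t n \<in> {0..1 / Suc n}"
    and x: "\<And>n. real n * norm (x n) < norm (U (t n) (x n))"
    by metis
  have "t \<longlonglongrightarrow> 0"
    by (rule real_tendsto_sandwich[of "\<lambda>_. 0" _ _ "\<lambda>n. 1 / real (Suc n)"])
      (use t LIMSEQ_inverse_real_of_nat in \<open>auto simp: inverse_eq_divide\<close>)
  have "\<exists>B. \<forall>n\<in>UNIV. norm (U (t n) y) \<le> B" for y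
  proof -
    have "Bseq (\<lambda>n. U (t n) y)"
      using U_tendsto_at_0_sequentially t \<open>t \<longlonglongrightarrow> 0\<close> by (intro convergent_imp_Bseq convergentI) auto
    then show ?thesis by (auto simp: Bseq_def)
  qed
  moreover have "bounded_linear (U (t n))" for n
    using t[of n] by (intro bounded_linear_U) simp
  ultimately obtain M where M: "\<And>n y. norm (U (t n) y) \<le> M * norm y"
    using uniform_boundedness[of UNIV "\<lambda>n. U (t n)"] by blast
  obtain n :: nat where "M \<le> real n"
    using real_arch_simple by blast
  then have "norm (U (t n) (x n)) \<le> real n * norm (x n)"
    using M[of n "x n"] by (meson mult_right_mono norm_ge_zero order_trans)
  with x[of n] show False by simp
qed

lemma bounded_on_Icc_iterate:
  assumes d: "d > 0" and M: "M \<ge> 1" and dM: "\<And>t x. t \<in> {0..d} \<Longrightarrow> norm (U t x) \<le> M * norm x"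
  shows "\<forall>t\<in>{0..real k * d}. \<forall>x. norm (U t x) \<le> M ^ Suc k * norm x"
proof (induction k)
  case 0
  have "norm x \<le> M * norm x" for x :: 'a
    using M mult_right_mono[of 1 M "norm x"] by simp
  then show ?case by simp
next
  case (Suc k)
  show ?case
  proof (intro ballI allI)
    fix t x assume t: "t \<in> {0..real (Suc k) * d}"
    show "norm (U t x) \<le> M ^ Suc (Suc k) * norm x"
    proof (cases "t \<le> d")
      case True
      then have "norm (U t x) \<le> M * norm x" using t by (intro dM) auto
      also have "\<dots> \<le> M ^ Suc (Suc k) * norm x"
        using M by (intro mult_right_mono) (auto simp: power_increasing[of 1 "Suc (Suc k)" M, simplified])
      finally show ?thesis .
    next
      case False
      then have "t - d \<in> {0..real k * d}" using t by (auto simp: algebra_simps)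
      have "norm (U t x) = norm (U d (U (t - d) x))"
        using U_add_time[of d "t - d" x] False d by simp
      also have "\<dots> \<le> M * norm (U (t - d) x)"
        using d dM[of d] by simp
      also have "\<dots> \<le> M * (M ^ Suc k * norm x)"
        using Suc \<open>t - d \<in> {0..real k * d}\<close> M by (intro mult_left_mono) auto
      finally show ?thesis by (simp add: mult.assoc)
    qed
  qed
qed

lemma bounded_on_Icc: "\<exists>M\<ge>1. \<forall>t\<in>{0..T}. \<forall>x. norm (U t x) \<le> M * norm x"
proof -
  obtain d M0 where d: "d > 0" and M0: "\<And>t x. t \<in> {0..d} \<Longrightarrow> norm (U t x) \<le> M0 * norm x"
    using locally_bounded by blast
  define M where "M = max 1 M0"
  have M: "M \<ge> 1" unfolding M_def by simp
  have dM: "norm (U t x) \<le> M * norm x" if "t \<in> {0..d}" for t x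
    using M0[OF that] unfolding M_def by (meson max.cobounded2 mult_right_mono norm_ge_zero order_trans)
  obtain k :: nat where "T / d < real k" using reals_Archimedean2 by blast
  then have "T \<le> real k * d" using d by (simp add: field_simps)
  moreover have "M ^ Suc k \<ge> 1" using M one_le_power by blast
  ultimately show ?thesis
    using bounded_on_Icc_iterate[OF d M dM, of k] by (intro exI[of _ "M ^ Suc k"]) auto
qed

lemma orbit_tendsto_right: assumes "t0 \<ge> 0" shows "((\<lambda>t. U t x) \<longlongrightarrow> U t0 x) (at_right t0)"
proof -
  have "((\<lambda>h. U t0 (U h x)) \<longlongrightarrow> U t0 x) (at_right 0)"
    using U_tendsto[OF assms U_tendsto_0] .
  moreover have "eventually (\<lambda>h. U t0 (U h x) = U (h + t0) x) (at_right 0)"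
    using eventually_at_right_less[of 0]
    by eventually_elim (use assms U_add_time[of t0 _ x] in \<open>simp add: add.commute\<close>)
  ultimately have "((\<lambda>h. U (h + t0) x) \<longlongrightarrow> U t0 x) (at_right 0)"
    by (rule Lim_transform_eventually)
  then show ?thesis by (simp add: filterlim_at_right_to_0[of _ _ t0])
qed

lemma orbit_tendsto_left: assumes "t0 > 0" shows "((\<lambda>t. U t x) \<longlongrightarrow> U t0 x) (at_left t0)"
proof -
  obtain M where M: "\<And>t x. t \<in> {0..t0} \<Longrightarrow> norm (U t x) \<le> M * norm x"
    using bounded_on_Icc[of t0] by blast
  have "((\<lambda>h. U h x - x) \<longlongrightarrow> 0) (at_right 0)"
    using U_tendsto_0 by (simp add: LIM_zero_iff)
  then have lim: "((\<lambda>h. M * norm (U h x - x)) \<longlongrightarrow> 0) (at_right 0)"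
    using tendsto_mult_right_zero tendsto_norm_zero by blast
  have "eventually (\<lambda>h. norm (U (t0 - h) x - U t0 x) \<le> M * norm (U h x - x)) (at_right 0)"
    using eventually_at_right_real[OF assms]
  proof eventually_elim
    case (elim h)
    then have "U (t0 - h) x - U t0 x = U (t0 - h) (x - U h x)"
      using U_add_time[of "t0 - h" h x] by (simp add: U_diff)
    then show ?case
      using elim M[of "t0 - h"] by (simp add: norm_minus_commute)
  qed
  then have "((\<lambda>h. U (t0 - h) x - U t0 x) \<longlongrightarrow> 0) (at_right 0)"
    by (rule Lim_null_comparison[OF _ lim])
  then have "((\<lambda>h. U (- (h + - t0)) x) \<longlongrightarrow> U t0 x) (at_right 0)"
    by (simp add: LIM_zero_iff)
  then show ?thesis
    by (simp add: filterlim_at_left_to_right filterlim_at_right_to_0[of _ _ "-t0"])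
qed

lemma continuous_on_orbit: "continuous_on {0..} (\<lambda>t. U t x)"
  unfolding continuous_on_def
proof (intro ballI)
  fix t0 :: real assume "t0 \<in> {0..}"
  show "((\<lambda>t. U t x) \<longlongrightarrow> U t0 x) (at t0 within {0..})"
  proof (cases "t0 = 0")
    case True
    then show ?thesis using orbit_tendsto_right[of 0] by (simp add: at_within_Ici_at_right)
  next
    case False
    then have "((\<lambda>t. U t x) \<longlongrightarrow> U t0 x) (at t0)"
      using \<open>t0 \<in> {0..}\<close> orbit_tendsto_left orbit_tendsto_right
      by (simp add: at_eq_sup_left_right filterlim_sup)
    then show ?thesis by (rule tendsto_within_subset) simp
  qed
qed

lemma continuous_on_orbit_subset: "S \<subseteq> {0..} \<Longrightarrow> continuous_on S (\<lambda>t. U t x)"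
  using continuous_on_orbit continuous_on_subset by blast

lemma integrable_orbit: "a \<ge> 0 \<Longrightarrow> (\<lambda>t. U t x) integrable_on {a..b}"
  by (intro integrable_continuous_real continuous_on_orbit_subset) auto

definition orbit_integral :: "real \<Rightarrow> 'a \<Rightarrow> 'a" where
  "orbit_integral h b = integral {0..h} (\<lambda>s. U s b)"

lemma bounded_linear_orbit_integral:
  assumes h: "h \<ge> 0"
  shows "bounded_linear (orbit_integral h)"
proof -
  obtain M where M: "M \<ge> 1" "\<And>t x. t \<in> {0..h} \<Longrightarrow> norm (U t x) \<le> M * norm x"
    using bounded_on_Icc[of h] by blast
  show ?thesis
  proof (rule bounded_linear_intro[where K="M * h"])
    fix x y
    have "orbit_integral h (x + y) = integral {0..h} (\<lambda>s. U s x + U s y)"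
      unfolding orbit_integral_def by (rule integral_cong) (simp add: U_add)
    then show "orbit_integral h (x + y) = orbit_integral h x + orbit_integral h y"
      unfolding orbit_integral_def by (simp add: integral_add integrable_orbit)
  next
    fix r x
    have "orbit_integral h (r *\<^sub>R x) = integral {0..h} (\<lambda>s. r *\<^sub>R U s x)"
      unfolding orbit_integral_def by (rule integral_cong) (simp add: U_scaleR)
    then show "orbit_integral h (r *\<^sub>R x) = r *\<^sub>R orbit_integral h x"
      unfolding orbit_integral_def by simp
  next
    fix x
    have "norm (orbit_integral h x) \<le> (M * norm x) * (h - 0)"
      unfolding orbit_integral_def
      by (rule integral_bound) (use h M in \<open>auto intro: continuous_on_orbit_subset\<close>)
    then show "norm (orbit_integral h x) \<le> norm x * (M * h)" by (simp add: algebra_simps)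
  qed
qed

lemma U_orbit_integral:
  assumes "h \<ge> 0" "e \<ge> 0"
  shows "U e (orbit_integral h b) = integral {e..h+e} (\<lambda>s. U s b)"
proof -
  have "U e (orbit_integral h b) = integral {0..h} (U e \<circ> (\<lambda>s. U s b))"
    unfolding orbit_integral_def
    by (rule integral_linear[symmetric]) (use assms in \<open>auto intro: integrable_orbit bounded_linear_U\<close>)
  also have "\<dots> = integral {0..h} ((\<lambda>s. U s b) \<circ> (+) e)"
    by (rule integral_cong) (use assms in \<open>simp add: U_add_time\<close>)
  also have "\<dots> = integral {0+e..h+e} (\<lambda>s. U s b)"
    by (rule integral_shift_Icc_real)
  finally show ?thesis by simp
qed

lemma orbit_integral_U_commute:
  assumes "h \<ge> 0" "e \<ge> 0"
  shows "orbit_integral h (U e b) = U e (orbit_integral h b)"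
proof -
  have "orbit_integral h (U e b) = integral {0..h} (U e \<circ> (\<lambda>s. U s b))"
    unfolding orbit_integral_def
    by (rule integral_cong) (use assms U_add_time[of _ e b] U_add_time[of e _ b] in \<open>simp add: add.commute\<close>)
  also have "\<dots> = U e (orbit_integral h b)"
    unfolding orbit_integral_def
    by (rule integral_linear) (use assms in \<open>auto intro: integrable_orbit bounded_linear_U\<close>)
  finally show ?thesis .
qed

lemma orbit_integral_right_quotient:
  assumes "0 \<le> t"
  shows "((\<lambda>e. (1/e) *\<^sub>R (orbit_integral (t + e) b - orbit_integral t b)) \<longlongrightarrow> U t b) (at_right 0)"
proof (rule has_vector_derivative_right_quotient)
  have "((\<lambda>s. orbit_integral s b) has_vector_derivative U t b) (at t within {0..t+1})"
    unfolding orbit_integral_def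
    by (rule integral_has_vector_derivative) (use assms in \<open>auto intro: continuous_on_orbit_subset\<close>)
  then show "((\<lambda>s. orbit_integral s b) has_vector_derivative U t b) (at t within {t..t+1})"
    by (rule has_vector_derivative_within_subset) (use assms in auto)
qed simp

lemma orbit_integral_average_tendsto: "((\<lambda>h. (1/h) *\<^sub>R orbit_integral h b) \<longlongrightarrow> b) (at_right 0)"
  using orbit_integral_right_quotient[of 0 b] by (simp add: orbit_integral_def)

lemma orbit_integral_quotient:
  assumes h: "h \<ge> 0"
  shows "((\<lambda>e. (1/e) *\<^sub>R (U e (orbit_integral h b) - orbit_integral h b)) \<longlongrightarrow> U h b - b) (at_right 0)"
proof -
  have lim: "((\<lambda>e. (1/e) *\<^sub>R (orbit_integral (h + e) b - orbit_integral h b)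
      - (1/e) *\<^sub>R (orbit_integral (0 + e) b - orbit_integral 0 b)) \<longlongrightarrow> U h b - U 0 b) (at_right 0)"
    by (intro tendsto_diff orbit_integral_right_quotient) (use h in auto)
  have "eventually (\<lambda>e. (1/e) *\<^sub>R (orbit_integral (h + e) b - orbit_integral h b)
      - (1/e) *\<^sub>R (orbit_integral (0 + e) b - orbit_integral 0 b)
      = (1/e) *\<^sub>R (U e (orbit_integral h b) - orbit_integral h b)) (at_right 0)"
    using eventually_at_right_less[of 0]
  proof eventually_elim
    case (elim e)
    have "orbit_integral e b + integral {e..h+e} (\<lambda>s. U s b) = orbit_integral (h + e) b"
      unfolding orbit_integral_def
      by (rule Henstock_Kurzweil_Integration.integral_combine)
        (use h elim in \<open>auto intro: integrable_orbit\<close>)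
    then have "U e (orbit_integral h b) = orbit_integral (h + e) b - orbit_integral e b"
      using U_orbit_integral[OF h, of e b] elim by (simp add: algebra_simps)
    then show ?case by (simp add: orbit_integral_def scaleR_diff_right)
  qed
  from Lim_transform_eventually[OF lim this] show ?thesis by simp
qed

lemma gen_tendsto:
  "x \<in> gen_dom U \<Longrightarrow> ((\<lambda>h. (1/h) *\<^sub>R (U h x - x)) \<longlongrightarrow> gen U x) (at_right 0)"
  unfolding gen_dom_def gen_def using tendsto_Lim[OF trivial_limit_at_right_real] by auto

lemma gen_eqI:
  "((\<lambda>h. (1/h) *\<^sub>R (U h x - x)) \<longlongrightarrow> l) (at_right 0) \<Longrightarrow> x \<in> gen_dom U \<and> gen U x = l"
  unfolding gen_dom_def gen_def
  using tendsto_Lim[OF trivial_limit_at_right_real] tendsto_unique[OF trivial_limit_at_right_real]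
  by blast

lemma orbit_integral_in_gen_dom:
  "h \<ge> 0 \<Longrightarrow> orbit_integral h b \<in> gen_dom U \<and> gen U (orbit_integral h b) = U h b - b"
  by (rule gen_eqI) (rule orbit_integral_quotient)

lemma orbit_integral_gen:
  assumes h: "h \<ge> 0" and b: "b \<in> gen_dom U"
  shows "orbit_integral h (gen U b) = U h b - b"
proof -
  have lin: "linear (orbit_integral h)"
    using bounded_linear_orbit_integral[OF h] bounded_linear.linear by blast
  have "((\<lambda>e. orbit_integral h ((1/e) *\<^sub>R (U e b - b))) \<longlongrightarrow> orbit_integral h (gen U b)) (at_right 0)"
    using bounded_linear.tendsto[OF bounded_linear_orbit_integral[OF h] gen_tendsto[OF b]] .
  moreover have "eventually (\<lambda>e. (1/e) *\<^sub>R (U e (orbit_integral h b) - orbit_integral h b)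
      = orbit_integral h ((1/e) *\<^sub>R (U e b - b))) (at_right 0)"
    using eventually_at_right_less[of 0]
    by eventually_elim (use h in \<open>simp add: linear_scale[OF lin] linear_diff[OF lin] orbit_integral_U_commute\<close>)
  then have "((\<lambda>e. orbit_integral h ((1/e) *\<^sub>R (U e b - b))) \<longlongrightarrow> U h b - b) (at_right 0)"
    by (rule Lim_transform_eventually[OF orbit_integral_quotient[OF h]])
  ultimately show ?thesis
    using tendsto_unique[OF trivial_limit_at_right_real] by blast
qed

lemma gen_dom_dense: "closure (gen_dom U) = UNIV"
proof -
  have "b \<in> closure (gen_dom U)" for b
  proof (rule Lim_in_closed_set[OF closed_closure _ _ orbit_integral_average_tendsto])
    show "eventually (\<lambda>h. (1/h) *\<^sub>R orbit_integral h b \<in> closure (gen_dom U)) (at_right 0)"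
      using eventually_at_right_less[of 0]
    proof eventually_elim
      case (elim h)
      have "linear (orbit_integral h)"
        using bounded_linear_orbit_integral[of h] elim by (simp add: bounded_linear.linear)
      then have "(1/h) *\<^sub>R orbit_integral h b = orbit_integral h ((1/h) *\<^sub>R b)"
        by (simp add: linear_scale)
      then show ?case using orbit_integral_in_gen_dom[of h] elim closure_subset by auto
    qed
  qed simp
  then show ?thesis by auto
qed

text \<open>The generator is closed: \<open>U(h)a - a = \<integral>\<^sub>0\<^sup>h U(s)y ds\<close> passes to the limit.\<close>

lemma gen_closed:
  fixes x :: "nat \<Rightarrow> 'a"
  assumes x_dom: "\<And>n. x n \<in> gen_dom U" and x_lim: "x \<longlonglongrightarrow> a"
    and gen_lim: "(\<lambda>n. gen U (x n)) \<longlonglongrightarrow> y"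
  shows "a \<in> gen_dom U \<and> gen U a = y"
proof -
  have eq: "U h a - a = orbit_integral h y" if h: "h \<ge> 0" for h
  proof -
    have "(\<lambda>n. orbit_integral h (gen U (x n))) \<longlonglongrightarrow> orbit_integral h y"
      using bounded_linear.tendsto[OF bounded_linear_orbit_integral[OF h] gen_lim] .
    moreover have "(\<lambda>n. U h (x n) - x n) \<longlonglongrightarrow> U h a - a"
      by (intro tendsto_diff U_tendsto[OF h] x_lim)
    ultimately show ?thesis
      using orbit_integral_gen[OF h x_dom] LIMSEQ_unique by auto
  qed
  have "eventually (\<lambda>h. (1/h) *\<^sub>R orbit_integral h y = (1/h) *\<^sub>R (U h a - a)) (at_right 0)"
    using eventually_at_right_less[of 0] by eventually_elim (simp add: eq)
  from Lim_transform_eventually[OF orbit_integral_average_tendsto this] show ?thesis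
    by (rule gen_eqI)
qed

lemma cinner_gen_adj:
  assumes z: "z \<in> adj_dom (gen_dom U) (gen U)" and x: "x \<in> gen_dom U"
  shows "cinner (gen U x) z = cinner x (adj (gen_dom U) (gen U) z)"
proof -
  obtain w0 where w0: "\<forall>x\<in>gen_dom U. cinner (gen U x) z = cinner x w0"
    using z unfolding adj_dom_def by blast
  \<comment> \<open>the adjoint is well defined because the domain is dense\<close>
  have "w = w0" if w: "\<forall>x\<in>gen_dom U. cinner (gen U x) z = cinner x w" for w
  proof -
    have "closed {x. cinner x (w - w0) = 0}"
      using continuous_closed_preimage_constant[of UNIV "\<lambda>x. cinner x (w - w0)" 0]
      by (simp add: linear_continuous_on bounded_linear_cinner_left)
    moreover have "gen_dom U \<subseteq> {x. cinner x (w - w0) = 0}"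
      using w w0 by (auto simp: cinner_diff_right)
    ultimately have "closure (gen_dom U) \<subseteq> {x. cinner x (w - w0) = 0}"
      by (rule closure_minimal[rotated])
    then have "cinner (w - w0) (w - w0) = 0" using gen_dom_dense by auto
    then show ?thesis by (simp add: cinner_self_eq_zero)
  qed
  then have "adj (gen_dom U) (gen U) z = w0"
    unfolding adj_def using w0 by (intro the_equality) auto
  then show ?thesis using w0 x by simp
qed

lemma cinner_orbit_adj:
  assumes z: "z \<in> adj_dom (gen_dom U) (gen U)" and t: "t \<ge> 0"
  shows "cinner (U t b) z = cinner b z + integral {0..t} (\<lambda>\<sigma>. cinner (U \<sigma> b) (adj (gen_dom U) (gen U) z))"
proof -
  let ?w = "adj (gen_dom U) (gen U) z"
  have "cinner (U t b - b) z = cinner (orbit_integral t b) ?w"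
    using cinner_gen_adj[OF z] orbit_integral_in_gen_dom[OF t] by metis
  also have "\<dots> = integral {0..t} ((\<lambda>v. cinner v ?w) \<circ> (\<lambda>\<sigma>. U \<sigma> b))"
    unfolding orbit_integral_def
    by (rule integral_linear[symmetric]) (use t in \<open>auto intro: integrable_orbit bounded_linear_cinner_left\<close>)
  finally show ?thesis by (simp add: cinner_diff_left o_def algebra_simps)
qed

end

section \<open>The semigroup generated by \<open>QLQ\<close>\<close>

locale projected_semigroup = strongly_continuous_semigroup U
  for U :: "real \<Rightarrow> 'a::complex_hilbert \<Rightarrow> 'a" +
  fixes z w :: 'a and P Q :: "'a \<Rightarrow> 'a" and f :: "'a \<Rightarrow> real \<Rightarrow> complex" and u :: "'a \<Rightarrow> real \<Rightarrow> 'a"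
  assumes z_adj_dom: "z \<in> adj_dom (gen_dom U) (gen U)" and z_nonzero: "z \<noteq> 0"
    and w_def: "w = adj (gen_dom U) (gen U) z"
    and P_def: "P = (\<lambda>x. (cinner x z / cinner z z) *\<^sub>C z)"
    and Q_def: "Q = (\<lambda>x. x - P x)"
    and f_cont: "\<And>x. continuous_on {0..} (f x)"
    and f_eq: "\<And>x t. t \<ge> 0 \<Longrightarrow>
        f x t = cinner (U t (Q x)) (Q w) / cinner z z
              - integral {0..t} (\<lambda>s. f x (t - s) * (cinner (U s z) (Q w) / cinner z z))"
    and u_def: "u = (\<lambda>x t. P x + U t (Q x) - integral {0..t} (\<lambda>s. f x (t - s) *\<^sub>C U s z))"
begin

definition phi :: "'a \<Rightarrow> complex" where
  "phi b = cinner b (Q w) / cinner z z"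

definition kernel :: "real \<Rightarrow> complex" where
  "kernel s = phi (U s z)"

definition memory :: "'a \<Rightarrow> real \<Rightarrow> 'a" where
  "memory x t = integral {0..t} (\<lambda>s. f x (t - s) *\<^sub>C U s z)"

definition u_perp :: "'a \<Rightarrow> real \<Rightarrow> 'a" where
  "u_perp x t = U t (Q x) - memory x t"

lemma u_eq: "u x t = P x + u_perp x t"
  by (simp add: u_def u_perp_def memory_def)

lemma cinner_z_z_nonzero: "cinner z z \<noteq> 0"
  using z_nonzero by (simp add: cinner_self_eq_zero)

lemma cinner_gen_z: "x \<in> gen_dom U \<Longrightarrow> cinner (gen U x) z = cinner x w"
  using cinner_gen_adj[OF z_adj_dom] w_def by simp

lemma P_eq: "P x = (cinner x z / cinner z z) *\<^sub>C z"
  by (simp add: P_def)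

lemma Q_eq: "Q x = x - P x"
  by (simp add: Q_def)

lemma P_plus_Q: "P x + Q x = x"
  by (simp add: Q_eq)

lemma bounded_linear_P: "bounded_linear P"
  unfolding P_def
  using bounded_linear_compose[OF bounded_linear_compose[OF bounded_linear_scaleC_left[of z]
      bounded_linear_divide[of "cinner z z"]] bounded_linear_cinner_left[of z]]
  by (simp add: o_def)

lemma bounded_linear_Q: "bounded_linear Q"
  unfolding Q_def using bounded_linear_sub[OF bounded_linear_ident bounded_linear_P] by simp

lemma P_add: "P (x + y) = P x + P y"
  using bounded_linear_P bounded_linear.linear linear_add by blast

lemma Q_add: "Q (x + y) = Q x + Q y"
  using bounded_linear_Q bounded_linear.linear linear_add by blast

lemma P_scaleC: "P (a *\<^sub>C x) = a *\<^sub>C P x"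
  by (simp add: P_eq cinner_scaleC_left scaleC_scaleC)

lemma Q_scaleC: "Q (a *\<^sub>C x) = a *\<^sub>C Q x"
  by (simp add: Q_eq P_scaleC scaleC_diff_right)

lemma P_scaleC_z: "P (a *\<^sub>C z) = a *\<^sub>C z"
  using cinner_z_z_nonzero by (simp add: P_eq cinner_scaleC_left)

lemma Q_scaleC_z: "Q (a *\<^sub>C z) = 0"
  by (simp add: Q_eq P_scaleC_z)

lemma P_P: "P (P x) = P x"
  by (simp add: P_eq[of x] P_scaleC_z)

lemma cinner_Q_z: "cinner (Q x) z = 0"
  using cinner_z_z_nonzero by (simp add: Q_eq P_eq cinner_diff_left cinner_scaleC_left)

lemma P_Q: "P (Q x) = 0"
  by (simp add: P_eq cinner_Q_z)

lemma bounded_linear_phi: "bounded_linear phi"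
  unfolding phi_def[abs_def]
  using bounded_linear_compose[OF bounded_linear_divide[of "cinner z z"] bounded_linear_cinner_left[of "Q w"]]
  by (simp add: o_def)

lemma phi_add: "phi (x + y) = phi x + phi y"
  by (simp add: phi_def cinner_add_left add_divide_distrib)

lemma phi_diff: "phi (x - y) = phi x - phi y"
  by (simp add: phi_def cinner_diff_left diff_divide_distrib)

lemma phi_scaleC: "phi (a *\<^sub>C b) = a * phi b"
  by (simp add: phi_def cinner_scaleC_left)

lemma phi_integral_scaleC:
  fixes c :: "real \<Rightarrow> complex" and v :: "real \<Rightarrow> 'a"
  assumes t: "t \<ge> 0" and c: "continuous_on {0..t} c" and v: "continuous_on {0..t} v"
  shows "phi (integral {0..t} (\<lambda>r. c r *\<^sub>C v r)) = integral {0..t} (\<lambda>r. c r * phi (v r))"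
proof -
  have "phi (integral {0..t} (\<lambda>r. c r *\<^sub>C v r)) = integral {0..t} (phi \<circ> (\<lambda>r. c r *\<^sub>C v r))"
    by (rule integral_linear[symmetric, OF integrable_continuous_real[OF continuous_on_scaleC[OF c v]]
          bounded_linear_phi])
  then show ?thesis by (simp add: o_def phi_scaleC)
qed

lemma continuous_on_kernel: "continuous_on {0..} kernel"
  unfolding kernel_def[abs_def] phi_def
  using cinner_z_z_nonzero by (intro continuous_intros continuous_on_orbit) auto

lemma f_volterra: "t \<ge> 0 \<Longrightarrow> f x t = phi (U t (Q x)) - volterra_conv (f x) kernel t"
  using f_eq[of t x] by (simp add: phi_def kernel_def volterra_conv_def)

lemma f_0: "f x 0 = phi (Q x)"
  using f_volterra[of 0 x] by simp

lemma f_add: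
  assumes "t \<ge> 0"
  shows "f (x + y) t = f x t + f y t"
proof (rule volterra_solution_unique[OF f_cont _ continuous_on_kernel _ _ assms])
  show "continuous_on {0..} (\<lambda>\<tau>. f x \<tau> + f y \<tau>)"
    by (intro continuous_intros f_cont)
  show "f (x + y) s = phi (U s (Q (x + y))) - volterra_conv (f (x + y)) kernel s" if "s \<ge> 0" for s
    using that by (rule f_volterra)
  show "f x s + f y s = phi (U s (Q (x + y))) - volterra_conv (\<lambda>\<tau>. f x \<tau> + f y \<tau>) kernel s"
    if "s \<ge> 0" for s
    using that f_volterra[OF that, of x] f_volterra[OF that, of y]
    by (simp add: volterra_conv_add[OF f_cont f_cont continuous_on_kernel] Q_add U_add phi_add)
qed

lemma f_scaleC:
  assumes "t \<ge> 0"
  shows "f (a *\<^sub>C x) t = a * f x t"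
proof (rule volterra_solution_unique[OF f_cont _ continuous_on_kernel _ _ assms])
  show "continuous_on {0..} (\<lambda>\<tau>. a * f x \<tau>)"
    by (intro continuous_intros f_cont)
  show "f (a *\<^sub>C x) s = phi (U s (Q (a *\<^sub>C x))) - volterra_conv (f (a *\<^sub>C x)) kernel s"
    if "s \<ge> 0" for s
    using that by (rule f_volterra)
  show "a * f x s = phi (U s (Q (a *\<^sub>C x))) - volterra_conv (\<lambda>\<tau>. a * f x \<tau>) kernel s"
    if "s \<ge> 0" for s
    using that f_volterra[OF that, of x]
    by (simp add: volterra_conv_cmult Q_scaleC U_scaleC phi_scaleC right_diff_distrib)
qed

lemma f_bound: "\<exists>C\<ge>0. \<forall>x. \<forall>t\<in>{0..T}. cmod (f x t) \<le> C * norm x"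
proof -
  obtain M where M: "M \<ge> 1" "\<And>t x. t \<in> {0..T} \<Longrightarrow> norm (U t x) \<le> M * norm x"
    using bounded_on_Icc[of T] by blast
  obtain nQ where nQ: "nQ > 0" "\<And>x. norm (Q x) \<le> nQ * norm x"
    using bounded_linear.pos_bounded[OF bounded_linear_Q] by (auto simp: mult.commute)
  obtain np where np: "np > 0" "\<And>b. cmod (phi b) \<le> np * norm b"
    using bounded_linear.pos_bounded[OF bounded_linear_phi] by (auto simp: mult.commute)
  obtain K where K: "K \<ge> 0" "\<forall>s\<in>{0..T}. cmod (kernel s) \<le> K"
    using continuous_on_bound_Icc[OF continuous_on_kernel] by auto
  have "cmod (phi (U s (Q x))) \<le> np * M * nQ * norm x" if "s \<in> {0..T}" for x s
  proof -
    have "cmod (phi (U s (Q x))) \<le> np * (M * norm (Q x))"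
      using np M(2)[OF that] by (meson mult_left_mono less_imp_le order_trans)
    also have "\<dots> \<le> np * (M * (nQ * norm x))"
      using nQ M np by (intro mult_left_mono) auto
    finally show ?thesis by (simp add: mult.assoc)
  qed
  then have "cmod (f x t) \<le> (np * M * nQ * exp (K * T)) * norm x" if "t \<in> {0..T}" for x t
    using volterra_solution_bound[OF f_cont continuous_on_kernel f_volterra _ K that,
        where A="np * M * nQ * norm x"]
    by (simp add: algebra_simps)
  moreover have "np * M * nQ * exp (K * T) \<ge> 0"
    using np M nQ by simp
  ultimately show ?thesis by blast
qed

lemma continuous_on_memory_integrand:
  "t \<ge> 0 \<Longrightarrow> continuous_on {0..t} (\<lambda>s. f x (t - s) *\<^sub>C U s z)"
  by (intro continuous_intros continuous_on_reflect_Icc[OF f_cont] continuous_on_orbit_subset) auto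

lemma integrable_memory_integrand:
  "t \<ge> 0 \<Longrightarrow> (\<lambda>s. f x (t - s) *\<^sub>C U s z) integrable_on {0..t}"
  by (rule integrable_continuous_real[OF continuous_on_memory_integrand])

lemma memory_add:
  assumes t: "t \<ge> 0"
  shows "memory (x + y) t = memory x t + memory y t"
proof -
  have "memory (x + y) t = integral {0..t} (\<lambda>s. f x (t - s) *\<^sub>C U s z + f y (t - s) *\<^sub>C U s z)"
    unfolding memory_def by (rule integral_cong) (use t in \<open>simp add: f_add scaleC_add_left\<close>)
  then show ?thesis
    unfolding memory_def by (simp add: integral_add integrable_memory_integrand t)
qed

lemma memory_scaleC:
  assumes t: "t \<ge> 0"
  shows "memory (a *\<^sub>C x) t = a *\<^sub>C memory x t"
proof -
  have "memory (a *\<^sub>C x) t = integral {0..t} ((\<lambda>v. a *\<^sub>C v) \<circ> (\<lambda>s. f x (t - s) *\<^sub>C U s z))"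
    unfolding memory_def by (rule integral_cong) (simp add: f_scaleC scaleC_scaleC)
  also have "\<dots> = a *\<^sub>C memory x t"
    unfolding memory_def
    by (rule integral_linear[OF integrable_memory_integrand[OF t] bounded_linear_scaleC_right])
  finally show ?thesis .
qed

lemma memory_bound: "\<exists>B\<ge>0. \<forall>x. \<forall>t\<in>{0..T}. norm (memory x t) \<le> B * norm x * t"
proof -
  obtain M where M: "M \<ge> 1" "\<And>t x. t \<in> {0..T} \<Longrightarrow> norm (U t x) \<le> M * norm x"
    using bounded_on_Icc[of T] by blast
  obtain C where C: "C \<ge> 0" "\<And>x t. t \<in> {0..T} \<Longrightarrow> cmod (f x t) \<le> C * norm x"
    using f_bound[of T] by blast
  have "norm (memory x t) \<le> (C * M * norm z) * norm x * t" if t: "t \<in> {0..T}" for x t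
  proof -
    have "norm (memory x t) \<le> ((C * norm x) * (M * norm z)) * (t - 0)"
      unfolding memory_def
    proof (rule integral_bound)
      fix s assume s: "s \<in> {0..t}"
      then have "t - s \<in> {0..T}" "s \<in> {0..T}" using t by auto
      then show "norm (f x (t - s) *\<^sub>C U s z) \<le> (C * norm x) * (M * norm z)"
        using C M by (simp add: norm_scaleC mult_mono')
    qed (use t in \<open>auto intro: continuous_on_memory_integrand\<close>)
    then show ?thesis by (simp add: algebra_simps)
  qed
  moreover have "C * M * norm z \<ge> 0" using C M by simp
  ultimately show ?thesis by blast
qed

lemma memory_tendsto_0: "(memory x \<longlongrightarrow> 0) (at_right 0)"
proof -
  obtain B where B: "\<And>x s. s \<in> {0..1} \<Longrightarrow> norm (memory x s) \<le> B * norm x * s"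
    using memory_bound[of 1] by blast
  have "eventually (\<lambda>t. t \<in> {0<..<1::real}) (at_right 0)"
    by (rule eventually_at_right_real) simp
  then have "eventually (\<lambda>t. norm (memory x t) \<le> (B * norm x) * t) (at_right 0)"
    by eventually_elim (use B in auto)
  moreover have "((\<lambda>t. (B * norm x) * t) \<longlongrightarrow> 0) (at_right 0)"
    by (intro tendsto_mult_right_zero tendsto_ident_at)
  ultimately show ?thesis by (rule Lim_null_comparison)
qed

lemma continuous_on_memory_integrand_quadrant:
  "continuous_on ({0..} \<times> {0..}) (\<lambda>(a, b). f x a *\<^sub>C U b z)"
  unfolding case_prod_beta'
  by (intro continuous_intros continuous_on_compose2[OF f_cont continuous_on_fst[OF continuous_on_id]]
      continuous_on_compose2[OF continuous_on_orbit continuous_on_snd[OF continuous_on_id]]) auto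

lemma continuous_on_memory: "continuous_on {0..} (memory x)"
  unfolding memory_def[abs_def]
  by (rule continuous_on_convolution_integral[OF continuous_on_memory_integrand_quadrant, simplified])

lemma memory_quotient_tendsto: "((\<lambda>h. (1/h) *\<^sub>R memory x h) \<longlongrightarrow> f x 0 *\<^sub>C z) (at_right 0)"
  unfolding memory_def
  by (rule average_convolution_tendsto[OF continuous_on_memory_integrand_quadrant, simplified])

lemma bounded_clin_u:
  assumes t: "t \<ge> 0"
  shows "bounded_clin (\<lambda>x. u x t)"
proof -
  obtain nP where nP: "\<And>x. norm (P x) \<le> nP * norm x"
    using bounded_linear.pos_bounded[OF bounded_linear_P] by (auto simp: mult.commute)
  obtain nQ where nQ: "nQ > 0" "\<And>x. norm (Q x) \<le> nQ * norm x"
    using bounded_linear.pos_bounded[OF bounded_linear_Q] by (auto simp: mult.commute)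
  obtain M where M: "M \<ge> 1" "\<And>s x. s \<in> {0..t} \<Longrightarrow> norm (U s x) \<le> M * norm x"
    using bounded_on_Icc[of t] by blast
  obtain B where B: "\<And>x s. s \<in> {0..t} \<Longrightarrow> norm (memory x s) \<le> B * norm x * s"
    using memory_bound[of t] by blast
  have "norm (u x t) \<le> (nP + M * nQ + B * t) * norm x" for x
  proof -
    have "norm (u x t) \<le> norm (P x) + norm (U t (Q x)) + norm (memory x t)"
      unfolding u_eq u_perp_def
      using norm_triangle_ineq[of "P x" "U t (Q x) - memory x t"] norm_triangle_ineq4[of "U t (Q x)" "memory x t"]
      by simp
    also have "\<dots> \<le> nP * norm x + M * (nQ * norm x) + B * norm x * t"
    proof (intro add_mono nP)
      have "norm (U t (Q x)) \<le> M * norm (Q x)" using M(2)[of t] t by simp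
      also have "\<dots> \<le> M * (nQ * norm x)" using M nQ by (intro mult_left_mono) auto
      finally show "norm (U t (Q x)) \<le> M * (nQ * norm x)" .
      show "norm (memory x t) \<le> B * norm x * t" using B[of t] t by simp
    qed
    finally show ?thesis by (simp add: algebra_simps)
  qed
  moreover have "u (x + y) t = u x t + u y t" for x y
    using t by (simp add: u_eq u_perp_def P_add Q_add U_add memory_add algebra_simps)
  moreover have "u (a *\<^sub>C x) t = a *\<^sub>C u x t" for a x
    using t by (simp add: u_eq u_perp_def P_scaleC Q_scaleC U_scaleC memory_scaleC
        scaleC_add_right scaleC_diff_right)
  ultimately show ?thesis unfolding bounded_clin_def by blast
qed

lemma u_0: "u x 0 = x"
  by (simp add: u_eq u_perp_def memory_def P_plus_Q)

lemma u_tendsto_0: "((\<lambda>t. u x t) \<longlongrightarrow> x) (at_right 0)"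
proof -
  have "((\<lambda>t. P x + (U t (Q x) - memory x t)) \<longlongrightarrow> P x + (Q x - 0)) (at_right 0)"
    by (intro tendsto_intros U_tendsto_0 memory_tendsto_0)
  then show ?thesis by (simp add: u_eq u_perp_def P_plus_Q)
qed


lemma u_minus_id: "u x h - x = (U h (Q x) - Q x) - memory x h"
proof -
  have "u x h - x = P x + (U h (Q x) - memory x h) - (P x + Q x)"
    by (simp add: u_eq u_perp_def P_plus_Q)
  then show ?thesis by (simp add: algebra_simps)
qed

lemma gen_Q_minus_f_0:
  assumes "Q x \<in> gen_dom U"
  shows "gen U (Q x) - f x 0 *\<^sub>C z = Q (gen U (Q x))"
proof -
  have "cinner (Q x) (P w) = 0"
    by (simp add: P_eq cinner_scaleC_right cinner_Q_z)
  then have "cinner (Q x) (Q w) = cinner (Q x) w"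
    by (simp add: Q_eq cinner_diff_right)
  then have "f x 0 *\<^sub>C z = P (gen U (Q x))"
    by (simp add: f_0 phi_def P_eq cinner_gen_z[OF assms])
  then show ?thesis by (simp add: Q_eq)
qed

lemma u_quotient_tendsto:
  assumes "Q x \<in> gen_dom U"
  shows "((\<lambda>h. (1/h) *\<^sub>R (u x h - x)) \<longlongrightarrow> Q (gen U (Q x))) (at_right 0)"
proof -
  have "((\<lambda>h. (1/h) *\<^sub>R (U h (Q x) - Q x) - (1/h) *\<^sub>R memory x h)
      \<longlongrightarrow> gen U (Q x) - f x 0 *\<^sub>C z) (at_right 0)"
    by (intro tendsto_diff gen_tendsto[OF assms] memory_quotient_tendsto)
  then show ?thesis
    by (simp add: u_minus_id scaleR_diff_right gen_Q_minus_f_0[OF assms])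
qed

lemma Q_in_gen_dom_if_u_quotient_tendsto:
  assumes "((\<lambda>h. (1/h) *\<^sub>R (u x h - x)) \<longlongrightarrow> l) (at_right 0)"
  shows "Q x \<in> gen_dom U"
proof -
  have "((\<lambda>h. (1/h) *\<^sub>R (u x h - x) + (1/h) *\<^sub>R memory x h) \<longlongrightarrow> l + f x 0 *\<^sub>C z) (at_right 0)"
    by (intro tendsto_add assms memory_quotient_tendsto)
  then have "((\<lambda>h. (1/h) *\<^sub>R (U h (Q x) - Q x)) \<longlongrightarrow> l + f x 0 *\<^sub>C z) (at_right 0)"
    by (simp add: u_minus_id scaleR_diff_right)
  then show ?thesis unfolding gen_dom_def by auto
qed

lemma gen_dom_u: "gen_dom (\<lambda>t x. u x t) = {x. Q x \<in> gen_dom U}"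
  unfolding gen_dom_def[of "\<lambda>t x. u x t"]
  using Q_in_gen_dom_if_u_quotient_tendsto u_quotient_tendsto by blast

lemma gen_u:
  assumes "Q x \<in> gen_dom U"
  shows "gen (\<lambda>t x. u x t) x = Q (gen U (Q x))"
  unfolding gen_def[of "\<lambda>t x. u x t"] using tendsto_Lim[OF trivial_limit_at_right_real u_quotient_tendsto[OF assms]] by simp

lemma closed_graph_QL: "closed (op_graph (gen_dom U) (\<lambda>x. Q (gen U x)))"
  unfolding closed_sequential_limits
proof (intro allI impI, elim conjE)
  fix p :: "nat \<Rightarrow> 'a \<times> 'a" and l
  assume p_graph: "\<forall>n. p n \<in> op_graph (gen_dom U) (\<lambda>x. Q (gen U x))" and p_lim: "p \<longlonglongrightarrow> l"
  define a where "a n = fst (p n)" for n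
  obtain la lb where l: "l = (la, lb)" by (cases l)
  have a_dom: "a n \<in> gen_dom U" and p_snd: "snd (p n) = Q (gen U (a n))" for n
  proof -
    obtain y where "p n = (y, Q (gen U y))" "y \<in> gen_dom U"
      using p_graph unfolding op_graph_def by blast
    then show "a n \<in> gen_dom U" "snd (p n) = Q (gen U (a n))"
      by (simp_all add: a_def)
  qed
  have a_lim: "a \<longlonglongrightarrow> la"
    unfolding a_def using tendsto_fst[OF p_lim] l by simp
  have QL_lim: "(\<lambda>n. Q (gen U (a n))) \<longlonglongrightarrow> lb"
    using tendsto_snd[OF p_lim] l p_snd by simp
  have "(\<lambda>n. Q (gen U (a n)) + (cinner (a n) w / cinner z z) *\<^sub>C z)
      \<longlonglongrightarrow> lb + (cinner la w / cinner z z) *\<^sub>C z"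
    using cinner_z_z_nonzero by (intro tendsto_intros QL_lim a_lim) auto
  moreover have "Q (gen U (a n)) + (cinner (a n) w / cinner z z) *\<^sub>C z = gen U (a n)" for n
    by (simp add: Q_eq P_eq cinner_gen_z[OF a_dom])
  ultimately have "(\<lambda>n. gen U (a n)) \<longlonglongrightarrow> lb + (cinner la w / cinner z z) *\<^sub>C z"
    by simp
  from gen_closed[OF a_dom a_lim this]
  have la: "la \<in> gen_dom U" "gen U la = lb + (cinner la w / cinner z z) *\<^sub>C z"
    by auto
  have "(\<lambda>n. P (Q (gen U (a n)))) \<longlonglongrightarrow> P lb"
    by (rule bounded_linear.tendsto[OF bounded_linear_P QL_lim])
  then have "P lb = 0"
    by (simp add: P_Q LIMSEQ_const_iff)
  then have "Q (gen U la) = lb"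
    by (simp add: la(2) Q_add Q_scaleC_z) (simp add: Q_eq)
  then show "l \<in> op_graph (gen_dom U) (\<lambda>x. Q (gen U x))"
    unfolding op_graph_def l using la(1) by auto
qed

lemma continuous_on_cinner_orbit: "continuous_on {0..} (\<lambda>\<sigma>. cinner (U \<sigma> b) v)"
  by (intro continuous_intros continuous_on_orbit)

lemma continuous_on_u_perp: "continuous_on {0..} (u_perp x)"
  unfolding u_perp_def[abs_def] by (intro continuous_intros continuous_on_orbit continuous_on_memory)

lemma f_eq_phi_u_perp:
  assumes s: "s \<ge> 0"
  shows "f x s = phi (u_perp x s)"
proof -
  have "phi (memory x s) = integral {0..s} (\<lambda>r. f x (s - r) * phi (U r z))"
    unfolding memory_def
    by (rule phi_integral_scaleC[OF s])
      (auto intro: continuous_on_reflect_Icc[OF f_cont s] continuous_on_orbit_subset)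
  then show ?thesis
    using f_volterra[OF s, of x] by (simp add: u_perp_def phi_diff volterra_conv_def kernel_def)
qed

lemma cinner_memory_z:
  assumes t: "t \<ge> 0"
  shows "cinner (memory x t) z
    = cinner z z * integral {0..t} (f x) + integral {0..t} (volterra_conv (f x) (\<lambda>\<sigma>. cinner (U \<sigma> z) w))"
proof -
  let ?m = "\<lambda>\<sigma>. cinner (U \<sigma> z) w"
  have m: "continuous_on {0..} ?m" by (rule continuous_on_cinner_orbit)
  have f_refl: "continuous_on {0..t} (\<lambda>r. f x (t - r))"
    by (rule continuous_on_reflect_Icc[OF f_cont t])
  have "cinner (memory x t) z = integral {0..t} ((\<lambda>v. cinner v z) \<circ> (\<lambda>r. f x (t - r) *\<^sub>C U r z))"
    unfolding memory_def
    by (rule integral_linear[symmetric, OF integrable_memory_integrand[OF t] bounded_linear_cinner_left])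
  also have "\<dots> = integral {0..t} (\<lambda>r. cinner z z * f x (t - r) + f x (t - r) * integral {0..r} ?m)"
    by (rule integral_cong)
      (use cinner_orbit_adj[OF z_adj_dom, of _ z] w_def in \<open>simp add: cinner_scaleC_left algebra_simps\<close>)
  also have "\<dots> = cinner z z * integral {0..t} (\<lambda>r. f x (t - r)) + integral {0..t} (\<lambda>r. f x (t - r) * integral {0..r} ?m)"
  proof -
    have "continuous_on {0..t} (\<lambda>r. integral {0..r} ?m)"
      by (intro indefinite_integral_continuous_1 integrable_continuous_real continuous_on_subset[OF m]) auto
    then show ?thesis
      by (subst integral_add) (auto intro!: integrable_continuous_real continuous_intros f_refl)
  qed
  also have "integral {0..t} (\<lambda>r. f x (t - r)) = integral {0..t} (f x)"
    using integral_reflect_shift_Icc[of 0 t "f x" t] by simp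
  also have "integral {0..t} (\<lambda>r. f x (t - r) * integral {0..r} ?m) = integral {0..t} (volterra_conv (f x) ?m)"
    using integral_mult_primitive_swap[OF f_cont m t] integral_volterra_conv_swap[OF f_cont m t] by simp
  finally show ?thesis .
qed

lemma integral_cinner_u_perp_w:
  assumes \<tau>: "\<tau> \<ge> 0"
  shows "integral {0..\<tau>} (\<lambda>s. cinner (u_perp x s) w)
    = integral {0..\<tau>} (\<lambda>s. cinner (U s (Q x)) w) - integral {0..\<tau>} (volterra_conv (f x) (\<lambda>\<sigma>. cinner (U \<sigma> z) w))"
proof -
  have "cinner (memory x s) w = volterra_conv (f x) (\<lambda>\<sigma>. cinner (U \<sigma> z) w) s" if "s \<ge> 0" for s
  proof -
    have "cinner (memory x s) w = integral {0..s} ((\<lambda>v. cinner v w) \<circ> (\<lambda>r. f x (s - r) *\<^sub>C U r z))"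
      unfolding memory_def
      by (rule integral_linear[symmetric, OF integrable_memory_integrand[OF that] bounded_linear_cinner_left])
    then show ?thesis
      by (simp add: volterra_conv_def o_def cinner_scaleC_left)
  qed
  then have "integral {0..\<tau>} (\<lambda>s. cinner (u_perp x s) w)
      = integral {0..\<tau>} (\<lambda>s. cinner (U s (Q x)) w - volterra_conv (f x) (\<lambda>\<sigma>. cinner (U \<sigma> z) w) s)"
    by (intro integral_cong) (simp add: u_perp_def cinner_diff_left)
  also have "\<dots> = integral {0..\<tau>} (\<lambda>s. cinner (U s (Q x)) w)
      - integral {0..\<tau>} (volterra_conv (f x) (\<lambda>\<sigma>. cinner (U \<sigma> z) w))"
    by (rule integral_diff)
      (auto intro!: integrable_continuous_real continuous_on_subset[OF continuous_on_cinner_orbit]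
        continuous_on_subset[OF continuous_on_volterra_conv[OF f_cont continuous_on_cinner_orbit]])
  finally show ?thesis .
qed

lemma cinner_u_perp_z_eq_integral:
  assumes \<tau>: "\<tau> \<ge> 0"
  shows "cinner (u_perp x \<tau>) z = integral {0..\<tau>} (\<lambda>s. cinner (u_perp x s) (P w))"
proof -
  have cont: "continuous_on {0..\<tau>} (\<lambda>s. cinner (u_perp x s) v)" for v
    by (intro continuous_intros continuous_on_subset[OF continuous_on_u_perp]) auto
  have "cinner (U \<tau> (Q x)) z = integral {0..\<tau>} (\<lambda>s. cinner (U s (Q x)) w)"
    using cinner_orbit_adj[OF z_adj_dom \<tau>, of "Q x"] w_def by (simp add: cinner_Q_z)
  moreover have "integral {0..\<tau>} (\<lambda>s. cinner (u_perp x s) (Q w)) = cinner z z * integral {0..\<tau>} (f x)"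
  proof -
    have "integral {0..\<tau>} (\<lambda>s. cinner (u_perp x s) (Q w)) = integral {0..\<tau>} (\<lambda>s. cinner z z * f x s)"
      by (rule integral_cong) (use f_eq_phi_u_perp[of _ x] cinner_z_z_nonzero in \<open>simp add: phi_def\<close>)
    then show ?thesis by simp
  qed
  moreover have "integral {0..\<tau>} (\<lambda>s. cinner (u_perp x s) (P w))
      = integral {0..\<tau>} (\<lambda>s. cinner (u_perp x s) w) - integral {0..\<tau>} (\<lambda>s. cinner (u_perp x s) (Q w))"
    unfolding Q_eq[of w] cinner_diff_right
    by (simp add: integral_diff integrable_continuous_real cont)
  ultimately show ?thesis
    using integral_cinner_u_perp_w[OF \<tau>, of x] cinner_memory_z[OF \<tau>, of x]
    by (simp add: u_perp_def cinner_diff_left)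
qed

text \<open>Since \<open>P L\<^sup>\<dagger>z\<close> is a multiple of \<open>z\<close>, the previous lemma is a homogeneous linear
  integral equation for \<open>(u\<^sub>\<perp>(x, t), z)\<close>; Gronwall's inequality forces it to vanish.\<close>

lemma cinner_u_perp_z:
  assumes t: "t \<ge> 0"
  shows "cinner (u_perp x t) z = 0"
proof -
  define h where "h s = cinner (u_perp x s) z" for s
  define \<kappa> where "\<kappa> = cnj (cinner w z / cinner z z)"
  have h: "continuous_on {0..} h"
    unfolding h_def[abs_def] by (intro continuous_intros continuous_on_u_perp)
  have h_eq: "h s = \<kappa> * integral {0..s} h" if "s \<ge> 0" for s
    using cinner_u_perp_z_eq_integral[OF that, of x]
    unfolding h_def[abs_def] \<kappa>_def by (simp add: P_eq cinner_scaleC_right)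
  have "cmod (h t) \<le> 0 * exp (cmod \<kappa> * t)"
  proof (rule gronwall_exp[where T=t])
    show "continuous_on {0..t} (\<lambda>r. cmod (h r))"
      by (intro continuous_intros continuous_on_subset[OF h]) auto
    fix s assume s: "s \<in> {0..t}"
    have "cmod (integral {0..s} h) \<le> integral {0..s} (\<lambda>r. cmod (h r))"
      by (rule integral_norm_bound_integral)
        (use s in \<open>auto intro!: integrable_continuous_real continuous_intros continuous_on_subset[OF h]\<close>)
    then show "cmod (h s) \<le> 0 + cmod \<kappa> * integral {0..s} (\<lambda>r. cmod (h r))"
      using h_eq[of s] s by (simp add: norm_mult mult_left_mono)
  qed (use t in auto)
  then show ?thesis by (simp add: h_def)
qed

lemma P_u_perp: "t \<ge> 0 \<Longrightarrow> P (u_perp x t) = 0"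
  by (simp add: P_eq cinner_u_perp_z)

lemma Q_u: "t \<ge> 0 \<Longrightarrow> Q (u x t) = u_perp x t"
  by (simp add: u_eq Q_add P_eq[of x] Q_scaleC_z) (simp add: Q_eq P_u_perp)

lemma P_u: "t \<ge> 0 \<Longrightarrow> P (u x t) = P x"
  by (simp add: u_eq P_add P_P P_u_perp)

lemma U_memory:
  assumes s: "s \<ge> 0" and t: "t \<ge> 0"
  shows "U s (memory x t) = integral {0..t} (\<lambda>r. f x (t - r) *\<^sub>C U (s + r) z)"
proof -
  have "U s (memory x t) = integral {0..t} (U s \<circ> (\<lambda>r. f x (t - r) *\<^sub>C U r z))"
    unfolding memory_def
    by (rule integral_linear[symmetric, OF integrable_memory_integrand[OF t] bounded_linear_U[OF s]])
  also have "\<dots> = integral {0..t} (\<lambda>r. f x (t - r) *\<^sub>C U (s + r) z)"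
    by (rule integral_cong) (use s in \<open>simp add: U_scaleC U_add_time\<close>)
  finally show ?thesis .
qed

lemma f_shift_volterra:
  assumes \<sigma>: "\<sigma> \<ge> 0" and t: "t \<ge> 0"
  shows "f x (\<sigma> + t) = phi (U \<sigma> (u_perp x t)) - volterra_conv (\<lambda>\<rho>. f x (\<rho> + t)) kernel \<sigma>"
proof -
  let ?tail = "integral {0..t} (\<lambda>r. f x (t - r) * kernel (\<sigma> + r))"
  have f_refl: "continuous_on {0..t} (\<lambda>r. f x (t - r))"
    by (rule continuous_on_reflect_Icc[OF f_cont t])
  have "volterra_conv (f x) kernel (\<sigma> + t)
      = integral {0..\<sigma>} (\<lambda>r. f x (\<sigma> + t - r) * kernel r) + ?tail"
    unfolding volterra_conv_def
    by (subst integral_Icc_split_shift[OF \<sigma> t])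
      (use \<sigma> t in \<open>auto intro!: continuous_intros continuous_on_reflect_Icc[OF f_cont]
        continuous_on_subset[OF continuous_on_kernel]\<close>)
  also have "integral {0..\<sigma>} (\<lambda>r. f x (\<sigma> + t - r) * kernel r) = volterra_conv (\<lambda>\<rho>. f x (\<rho> + t)) kernel \<sigma>"
    unfolding volterra_conv_def by (rule integral_cong) (simp add: algebra_simps)
  finally have split: "volterra_conv (f x) kernel (\<sigma> + t) = volterra_conv (\<lambda>\<rho>. f x (\<rho> + t)) kernel \<sigma> + ?tail" .
  have "phi (U \<sigma> (memory x t)) = integral {0..t} (\<lambda>r. f x (t - r) * phi (U (\<sigma> + r) z))"
    unfolding U_memory[OF \<sigma> t]
    by (rule phi_integral_scaleC[OF t f_refl], rule continuous_on_compose2[OF continuous_on_orbit])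
      (use \<sigma> in \<open>auto intro!: continuous_intros\<close>)
  then have "phi (U \<sigma> (u_perp x t)) = phi (U (\<sigma> + t) (Q x)) - ?tail"
    using \<sigma> t by (simp add: u_perp_def U_diff U_add_time phi_diff kernel_def)
  then show ?thesis
    using f_volterra[of "\<sigma> + t" x] \<sigma> t split by simp
qed

lemma f_shift:
  assumes s: "s \<ge> 0" and t: "t \<ge> 0"
  shows "f (u x t) s = f x (s + t)"
proof (rule volterra_solution_unique[OF f_cont _ continuous_on_kernel _ _ s])
  show "continuous_on {0..} (\<lambda>\<rho>. f x (\<rho> + t))"
    by (rule continuous_on_compose2[OF f_cont[of x]]) (use t in \<open>auto intro!: continuous_intros\<close>)
  show "f (u x t) \<sigma> = phi (U \<sigma> (u_perp x t)) - volterra_conv (f (u x t)) kernel \<sigma>" if "\<sigma> \<ge> 0" for \<sigma>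
    using f_volterra[OF that, of "u x t"] Q_u[OF t] by simp
  show "f x (\<sigma> + t) = phi (U \<sigma> (u_perp x t)) - volterra_conv (\<lambda>\<rho>. f x (\<rho> + t)) kernel \<sigma>"
    if "\<sigma> \<ge> 0" for \<sigma>
    by (rule f_shift_volterra[OF that t])
qed

lemma u_semigroup_law:
  assumes s: "s \<ge> 0" and t: "t \<ge> 0"
  shows "u (u x t) s = u x (s + t)"
proof -
  have "memory (u x t) s = integral {0..s} (\<lambda>r. f x (s + t - r) *\<^sub>C U r z)"
    unfolding memory_def by (rule integral_cong) (use t in \<open>simp add: f_shift algebra_simps\<close>)
  moreover have "memory x (s + t)
      = integral {0..s} (\<lambda>r. f x (s + t - r) *\<^sub>C U r z) + integral {0..t} (\<lambda>r. f x (t - r) *\<^sub>C U (s + r) z)"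
    unfolding memory_def
    by (subst integral_Icc_split_shift[OF s t])
      (use s t in \<open>auto intro!: continuous_intros continuous_on_reflect_Icc[OF f_cont]
        continuous_on_orbit_subset\<close>)
  moreover have "U s (u_perp x t) = U (s + t) (Q x) - integral {0..t} (\<lambda>r. f x (t - r) *\<^sub>C U (s + r) z)"
    using s t by (simp add: u_perp_def U_diff U_add_time U_memory)
  moreover have "u (u x t) s = P x + (U s (u_perp x t) - memory (u x t) s)"
    using t by (simp add: u_eq[of "u x t"] u_perp_def P_u Q_u)
  ultimately show ?thesis
    by (simp add: u_eq u_perp_def algebra_simps)
qed

lemma c0_semigroup_u: "c0_semigroup (\<lambda>t x. u x t)"
  unfolding c0_semigroup_def
proof (intro conjI allI impI)
  show "(\<lambda>x. u x (s + t)) = (\<lambda>x. u x s) \<circ> (\<lambda>x. u x t)" if "s \<ge> 0" "t \<ge> 0" for s t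
    using u_semigroup_law[OF that] by (simp add: fun_eq_iff)
qed (simp_all add: bounded_clin_u fun_eq_iff u_0 u_tendsto_0)

end

theorem corollary3:
  fixes U :: "real \<Rightarrow> 'a::complex_hilbert \<Rightarrow> 'a"
    and z w :: 'a
    and P Q :: "'a \<Rightarrow> 'a"
    and f :: "'a \<Rightarrow> real \<Rightarrow> complex"
    and u :: "'a \<Rightarrow> real \<Rightarrow> 'a"
  assumes U: "c0_semigroup U"
    and z: "z \<in> adj_dom (gen_dom U) (gen U)" "z \<noteq> 0"
    and w: "w = adj (gen_dom U) (gen U) z"
    and P: "P = (\<lambda>x. (cinner x z / cinner z z) *\<^sub>C z)"
    and Q: "Q = (\<lambda>x. x - P x)"
    and f_cont: "\<And>x. continuous_on {0..} (f x)"
    and f_eq: "\<And>x t. t \<ge> 0 \<Longrightarrow>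
        f x t = cinner (U t (Q x)) (Q w) / cinner z z
              - integral {0..t} (\<lambda>s. f x (t - s) * (cinner (U s z) (Q w) / cinner z z))"
    and u: "u = (\<lambda>x t. P x + U t (Q x) - integral {0..t} (\<lambda>s. f x (t - s) *\<^sub>C U s z))"
  shows "closable (gen_dom U) (\<lambda>x. Q (gen U x))
    \<and> {x. Q x \<in> op_closure_dom (gen_dom U) (\<lambda>x. Q (gen U x))} = {x. Q x \<in> gen_dom U}
    \<and> (\<forall>x. Q x \<in> gen_dom U \<longrightarrow> op_closure (gen_dom U) (\<lambda>x. Q (gen U x)) (Q x) = Q (gen U (Q x)))
    \<and> c0_semigroup (\<lambda>t x. u x t)
    \<and> gen_dom (\<lambda>t x. u x t) = {x. Q x \<in> gen_dom U}
    \<and> (\<forall>x. Q x \<in> gen_dom U \<longrightarrow> gen (\<lambda>t x. u x t) x = Q (gen U (Q x)))"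
proof -
  interpret projected_semigroup U z w P Q f u
    by unfold_locales (fact assms)+
  have graph: "closure (op_graph (gen_dom U) (\<lambda>x. Q (gen U x))) = op_graph (gen_dom U) (\<lambda>x. Q (gen U x))"
    by (rule closure_closed[OF closed_graph_QL])
  have "(a, b) \<in> op_graph (gen_dom U) (\<lambda>x. Q (gen U x)) \<longleftrightarrow> a \<in> gen_dom U \<and> b = Q (gen U a)" for a b
    unfolding op_graph_def by auto
  then have "closable (gen_dom U) (\<lambda>x. Q (gen U x))"
    and "op_closure_dom (gen_dom U) (\<lambda>x. Q (gen U x)) = gen_dom U"
    and "\<And>y. y \<in> gen_dom U \<Longrightarrow> op_closure (gen_dom U) (\<lambda>x. Q (gen U x)) y = Q (gen U y)"
    unfolding closable_def op_closure_dom_def op_closure_def graph by auto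
  then show ?thesis
    using c0_semigroup_u gen_dom_u gen_u by auto
qed

end
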